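(* There is a positive constant $C$ (depending only on $r$) such that for all $N\ge1$, all $S>0$ and all $\delta>0$, $$\sum_{k=1}^N P\Big(\Big|W_k\Big(X_{k,N}-\Big(\frac kN\Big)^r\Big)\Big|>\frac{\delta S}{2N}\Big)\le C\Big(\frac{N^{1-r}}{\delta S}\Big)^{2/(3-2r)}.$$
   Context: Fix $r\in(0,1)$. Multitype Yule process: at time $0$ a single individual of type $1$ is born; no deaths; each individual independently gives birth at rate $1$; a newborn has, independently, its parent's type with probability $1-r$ and otherwise a brand-new type. Individuals are numbered in order of birth (the initial one is the 1st); if the $k$-th individual born has a type different from its parent, that type is called type $k$. $T_N$ is the time the population reaches size $N$; $X_{k,N}$ is the fraction of individuals at time $T_N$ with type in $\{1,\dots,k\}$; $V_{k,N}$ is the fraction, among individuals at time $T_N$ with type in $\{1,\dots,k\}$, of those that have type $k$. $W_k=\lim_{N\to\infty}V_{k,N}$ (exists a.s.); the $W_k$ are independent, $W_1=1$, and for $k\ge2$, $P(W_k>0)=r$ and given $W_k>0$, $W_k\sim\mathrm{Beta}(1,k-1)$. *)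

theory Defs
  imports "HOL-Probability.Probability"
begin

text \<open>Discrete (jump-chain) model of the multitype Yule process, observed at the birth
times T_2, T_3, ... .  At step j (j = 0,1,2,...)
individual number j+2 is born; its parent is fst (omega j), uniform on {1..j+1}
(in a Yule process every current individual is equally likely to be the next parent),
and snd (omega j) = True (probability r) means the newborn gets a brand-new type,
namely type j+2.  All steps are independent.\<close>

definition yule_space :: "real \<Rightarrow> (nat \<Rightarrow> nat \<times> bool) measure" where
  "yule_space r = PiM UNIV (\<lambda>j. measure_pmf (pair_pmf (pmf_of_set {1..Suc j}) (bernoulli_pmf r)))"

text \<open>types omega n = list of the types of individuals 1..n (entry i-1 is the type of
individual i).\<close>
primrec types :: "(nat \<Rightarrow> nat \<times> bool) \<Rightarrow> nat \<Rightarrow> nat list" where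
  "types \<omega> 0 = []"
| "types \<omega> (Suc n) =
     (if n = 0 then [1]
      else types \<omega> n @
        [(if snd (\<omega> (n - 1)) then n + 1
          else (let p = fst (\<omega> (n - 1)) in
                if 1 \<le> p \<and> p \<le> n then types \<omega> n ! (p - 1) else 1))])"

definition ind_type :: "(nat \<Rightarrow> nat \<times> bool) \<Rightarrow> nat \<Rightarrow> nat" where
  "ind_type \<omega> i = types \<omega> i ! (i - 1)"

definition Xfrac :: "nat \<Rightarrow> nat \<Rightarrow> (nat \<Rightarrow> nat \<times> bool) \<Rightarrow> real" where
  "Xfrac k N \<omega> = real (card {i \<in> {1..N}. ind_type \<omega> i \<in> {1..k}}) / real N"

definition Vfrac :: "nat \<Rightarrow> nat \<Rightarrow> (nat \<Rightarrow> nat \<times> bool) \<Rightarrow> real" where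
  "Vfrac k N \<omega> = real (card {i \<in> {1..N}. ind_type \<omega> i = k})
                 / real (card {i \<in> {1..N}. ind_type \<omega> i \<in> {1..k}})"

text \<open>W_k = lim_{N\<rightarrow>\<infinity>} V_{k,N} (the limit exists almost surely).\<close>
definition Wlim :: "nat \<Rightarrow> (nat \<Rightarrow> nat \<times> bool) \<Rightarrow> real" where
  "Wlim k \<omega> = lim (\<lambda>N. Vfrac k N \<omega>)"

end

(*
  Fix k and let A n and C n count the individuals among the first n whose type is k, resp. lies
  in {1..k}.  A newborn takes a fresh type (which exceeds k) with probability r and otherwise
  copies a uniformly chosen parent, so (A, C) is a Polya urn slowed down by the fresh types.
  Consequently V n = A n / C n is a bounded martingale, whose almost sure limit W_k exists by the
  L2 maximal inequality, and so is Q n = A n (A n + 1) / (C n (C n + 1)), which dominates (V n)^2.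
  Hence E[W_k^2 Y^2] <= E[Q N Y^2] for every bounded Y determined by the first N individuals.
  For Y = X_{k,N} - (k/N)^r = (C N - k t) / N with t = (N/k)^(1-r), the Q-weighted first and
  second moments of C N obey linear recursions solved by products prod_i (1 + (1-r)/i), which
  are (N/k)^(1-r) up to a factor 1 + O(1/k); together with E[Q k] <= 2/k^2 this gives
  E[Q N (C N - k t)^2] = O((N/k)^(2(1-r)) / k).  By Chebyshev's inequality the k-th probability
  is at most min(1, c u^2 k^-(3-2r)) with u = N^(1-r) / (delta S), and summing over k gives
  O(u^(2/(3-2r))).
*)
theory Submission
  imports Defs
begin

section \<open>Functions of finitely many coordinates\<close>

definition prefix_determined :: "nat \<Rightarrow> ((nat \<Rightarrow> 'b) \<Rightarrow> 'a) \<Rightarrow> bool" where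
  "prefix_determined j g \<longleftrightarrow> (\<forall>\<omega> \<omega>'. (\<forall>i<j. \<omega> i = \<omega>' i) \<longrightarrow> g \<omega> = g \<omega>')"

lemma prefix_determinedI:
  "(\<And>\<omega> \<omega>'. (\<And>i. i < j \<Longrightarrow> \<omega> i = \<omega>' i) \<Longrightarrow> g \<omega> = g \<omega>') \<Longrightarrow> prefix_determined j g"
  unfolding prefix_determined_def by blast

lemma prefix_determinedD:
  "prefix_determined j g \<Longrightarrow> (\<And>i. i < j \<Longrightarrow> \<omega> i = \<omega>' i) \<Longrightarrow> g \<omega> = g \<omega>'"
  unfolding prefix_determined_def by blast

lemma prefix_determined_mono: "prefix_determined j g \<Longrightarrow> j \<le> j' \<Longrightarrow> prefix_determined j' g"
  unfolding prefix_determined_def by auto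

lemma prefix_determined_const [simp]: "prefix_determined j (\<lambda>_. c)"
  unfolding prefix_determined_def by auto

lemma prefix_determined_comp: "prefix_determined j g \<Longrightarrow> prefix_determined j (\<lambda>\<omega>. f (g \<omega>))"
  unfolding prefix_determined_def by metis

lemma prefix_determined_comp2:
  "prefix_determined j g \<Longrightarrow> prefix_determined j h \<Longrightarrow> prefix_determined j (\<lambda>\<omega>. f (g \<omega>) (h \<omega>))"
  unfolding prefix_determined_def by metis

lemma measurable_map_prefix:
  fixes p :: "nat \<Rightarrow> 'b::countable pmf"
  assumes "{..<m} \<subseteq> I"
  shows "(\<lambda>x. map x [0..<m]) \<in> PiM I (\<lambda>i. measure_pmf (p i)) \<rightarrow>\<^sub>M count_space UNIV"
  using assms
proof (induction m)
  case (Suc m)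
  let ?M = "PiM I (\<lambda>i. measure_pmf (p i))"
  have "m \<in> I"
    using Suc.prems by auto
  have "(\<lambda>x. (map x [0..<m], x m)) \<in> ?M \<rightarrow>\<^sub>M count_space UNIV \<Otimes>\<^sub>M count_space UNIV"
  proof (rule measurable_Pair)
    show "(\<lambda>x. map x [0..<m]) \<in> ?M \<rightarrow>\<^sub>M count_space UNIV"
      by (intro Suc.IH) (use Suc.prems in auto)
    show "(\<lambda>x. x m) \<in> ?M \<rightarrow>\<^sub>M count_space UNIV"
      using \<open>m \<in> I\<close> measurable_component_singleton[of m I "\<lambda>i. measure_pmf (p i)"]
      by (simp add: measurable_cong_sets)
  qed
  moreover have "(\<lambda>(l, y). l @ [y])
      \<in> (count_space UNIV \<Otimes>\<^sub>M count_space UNIV :: ('b list \<times> 'b) measure) \<rightarrow>\<^sub>M count_space UNIV"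
    by (simp add: pair_measure_countable)
  ultimately have "(\<lambda>x. (\<lambda>(l, y). l @ [y]) (map x [0..<m], x m)) \<in> ?M \<rightarrow>\<^sub>M count_space UNIV"
    by (rule measurable_compose)
  then show ?case
    by simp
qed simp

lemma measurable_prefix_determined:
  fixes p :: "nat \<Rightarrow> 'b::countable pmf"
  assumes "prefix_determined m g" "{..<m} \<subseteq> I"
  shows "g \<in> PiM I (\<lambda>i. measure_pmf (p i)) \<rightarrow>\<^sub>M count_space UNIV"
proof -
  define G where "G l = g (\<lambda>i. if i < length l then l ! i else undefined)" for l :: "'b list"
  have g_eq: "g = (\<lambda>x. G (map x [0..<m]))"
    unfolding G_def by (intro ext prefix_determinedD[OF assms(1)]) auto
  show ?thesis
    unfolding g_eq by (rule measurable_compose[OF measurable_map_prefix[OF assms(2)]]) simp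
qed

lemma borel_measurable_prefix_determined:
  fixes p :: "nat \<Rightarrow> 'b::countable pmf" and g :: "(nat \<Rightarrow> 'b) \<Rightarrow> 'c::topological_space"
  assumes "prefix_determined m g" "{..<m} \<subseteq> I"
  shows "g \<in> borel_measurable (PiM I (\<lambda>i. measure_pmf (p i)))"
proof -
  have "(\<lambda>x. x) \<in> count_space UNIV \<rightarrow>\<^sub>M (borel :: 'c measure)"
    by (simp add: measurable_count_space_eq1)
  from measurable_compose[OF measurable_prefix_determined[OF assms] this] show ?thesis
    by simp
qed

lemma sets_prefix_determined:
  fixes p :: "nat \<Rightarrow> 'b::countable pmf"
  assumes "prefix_determined m P"
  shows "{\<omega>. P \<omega>} \<in> sets (PiM UNIV (\<lambda>i. measure_pmf (p i)))"
  using measurable_sets[OF measurable_prefix_determined[OF assms, of UNIV p], of "{True}"]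
  by (simp add: space_PiM vimage_def)

lemma integrable_prefix_determined:
  fixes p :: "nat \<Rightarrow> 'b::countable pmf" and g :: "(nat \<Rightarrow> 'b) \<Rightarrow> real"
  assumes "prefix_determined m g" "\<And>\<omega>. \<bar>g \<omega>\<bar> \<le> B"
  shows "integrable (PiM UNIV (\<lambda>i. measure_pmf (p i))) g"
proof -
  interpret prob_space "PiM UNIV (\<lambda>i. measure_pmf (p i))"
    by (intro prob_space_PiM prob_space_measure_pmf)
  show ?thesis
    using assms borel_measurable_prefix_determined[OF assms(1)]
    by (intro integrable_const_bound[where B = B]) auto
qed

lemma integral_PiM_prefix:
  fixes p :: "nat \<Rightarrow> 'b::countable pmf" and f :: "(nat \<Rightarrow> 'b) \<Rightarrow> real"
  assumes "prefix_determined m f"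
  shows "(\<integral>\<omega>. f \<omega> \<partial>PiM UNIV (\<lambda>i. measure_pmf (p i))) = (\<integral>\<omega>. f \<omega> \<partial>PiM {..<m} (\<lambda>i. measure_pmf (p i)))"
proof -
  let ?M = "\<lambda>i. measure_pmf (p i)"
  interpret product_prob_space ?M UNIV
    by (simp add: product_prob_space_def product_sigma_finite_def prob_space_measure_pmf
        product_prob_space_axioms_def prob_space_imp_sigma_finite)
  have "(\<integral>\<omega>. f \<omega> \<partial>PiM {..<m} ?M) = (\<integral>\<omega>. f \<omega> \<partial>distr (PiM UNIV ?M) (PiM {..<m} ?M) (\<lambda>x. restrict x {..<m}))"
    by (simp add: distr_PiM_restrict_finite)
  also have "\<dots> = (\<integral>\<omega>. f (restrict \<omega> {..<m}) \<partial>PiM UNIV ?M)"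
    using borel_measurable_prefix_determined[OF assms order_refl]
    by (intro integral_distr) (auto intro: measurable_restrict_subset)
  also have "\<dots> = (\<integral>\<omega>. f \<omega> \<partial>PiM UNIV ?M)"
    by (intro Bochner_Integration.integral_cong refl prefix_determinedD[OF assms]) simp
  finally show ?thesis
    by (rule sym)
qed

text \<open>Coordinate \<open>j\<close> is independent of everything that \<open>F\<close> sees, so it can be integrated out first.\<close>
lemma integral_fresh_coordinate:
  fixes F :: "(nat \<Rightarrow> 'b::countable) \<Rightarrow> 'b \<Rightarrow> real" and p :: "nat \<Rightarrow> 'b pmf"
  assumes det: "\<And>x. prefix_determined j (\<lambda>\<omega>. F \<omega> x)" and bound: "\<And>\<omega> x. \<bar>F \<omega> x\<bar> \<le> B"
  shows "(\<integral>\<omega>. F \<omega> (\<omega> j) \<partial>PiM UNIV (\<lambda>i. measure_pmf (p i)))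
       = (\<integral>\<omega>. (\<integral>x. F \<omega> x \<partial>measure_pmf (p j)) \<partial>PiM UNIV (\<lambda>i. measure_pmf (p i)))"
proof -
  let ?M = "\<lambda>i. measure_pmf (p i)"
  interpret product_prob_space ?M UNIV
    by (simp add: product_prob_space_def product_sigma_finite_def prob_space_measure_pmf
        product_prob_space_axioms_def prob_space_imp_sigma_finite)
  have F_agree: "F \<omega> x = F \<omega>' x" if "\<And>i. i < j \<Longrightarrow> \<omega> i = \<omega>' i" for \<omega> \<omega>' x
    using det[of x] that by (simp add: prefix_determined_def)
  have F_upd: "F (fun_upd \<omega> j y) x = F \<omega> x" for \<omega> y x
    by (rule F_agree) simp
  have det_h: "prefix_determined (Suc j) (\<lambda>\<omega>. F \<omega> (\<omega> j))"
  proof (rule prefix_determinedI)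
    fix \<omega> \<omega>' :: "nat \<Rightarrow> 'b"
    assume agree: "\<And>i. i < Suc j \<Longrightarrow> \<omega> i = \<omega>' i"
    then have "F \<omega> x = F \<omega>' x" for x
      by (intro F_agree) simp
    then show "F \<omega> (\<omega> j) = F \<omega>' (\<omega>' j)"
      using agree[of j] by simp
  qed
  have det_G: "prefix_determined j (\<lambda>\<omega>. (\<integral>x. F \<omega> x \<partial>?M j))"
  proof (rule prefix_determinedI)
    fix \<omega> \<omega>' :: "nat \<Rightarrow> 'b"
    assume "\<And>i. i < j \<Longrightarrow> \<omega> i = \<omega>' i"
    then have "F \<omega> x = F \<omega>' x" for x
      by (rule F_agree)
    then show "(\<integral>x. F \<omega> x \<partial>?M j) = (\<integral>x. F \<omega>' x \<partial>?M j)"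
      by simp
  qed
  interpret fin: finite_measure "PiM (insert j {..<j}) ?M"
    using prob_space_PiM[of "insert j {..<j}" ?M] prob_space_measure_pmf prob_space_def by blast
  have "(\<integral>\<omega>. F \<omega> (\<omega> j) \<partial>PiM UNIV ?M) = (\<integral>\<omega>. F \<omega> (\<omega> j) \<partial>PiM (insert j {..<j}) ?M)"
    using integral_PiM_prefix[OF det_h] by (simp add: lessThan_Suc)
  also have "\<dots> = (\<integral>\<omega>. (\<integral>y. F (fun_upd \<omega> j y) (fun_upd \<omega> j y j) \<partial>?M j) \<partial>PiM {..<j} ?M)"
    using borel_measurable_prefix_determined[OF det_h, of "insert j {..<j}"] bound
    by (intro product_integral_insert fin.integrable_const_bound[where B = B])
       (auto simp: lessThan_Suc)
  also have "\<dots> = (\<integral>\<omega>. (\<integral>x. F \<omega> x \<partial>?M j) \<partial>PiM {..<j} ?M)"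
    by (simp add: F_upd)
  also have "\<dots> = (\<integral>\<omega>. (\<integral>x. F \<omega> x \<partial>?M j) \<partial>PiM UNIV ?M)"
    using integral_PiM_prefix[OF det_G] by simp
  finally show ?thesis .
qed

section \<open>Bounded martingales in the prefix filtration\<close>

text \<open>Conditional expectations are avoided:
  the martingale property is stated against bounded test functions known at time \<open>i\<close>.\<close>
locale prefix_martingale =
  fixes p :: "nat \<Rightarrow> 'b::countable pmf" and d :: "nat \<Rightarrow> nat" and U :: "nat \<Rightarrow> (nat \<Rightarrow> 'b) \<Rightarrow> real"
  assumes mono_d: "mono d"
    and determined: "\<And>i. prefix_determined (d i) (U i)"
    and nonneg: "\<And>i \<omega>. 0 \<le> U i \<omega>"
    and le_1: "\<And>i \<omega>. U i \<omega> \<le> 1"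
    and martingale: "\<And>i g B. prefix_determined (d i) g \<Longrightarrow> (\<And>\<omega>. \<bar>g \<omega>\<bar> \<le> B) \<Longrightarrow>
       (\<integral>\<omega>. g \<omega> * U (Suc i) \<omega> \<partial>PiM UNIV (\<lambda>j. measure_pmf (p j)))
       = (\<integral>\<omega>. g \<omega> * U i \<omega> \<partial>PiM UNIV (\<lambda>j. measure_pmf (p j)))"
begin

abbreviation M :: "(nat \<Rightarrow> 'b) measure" where
  "M \<equiv> PiM UNIV (\<lambda>i. measure_pmf (p i))"

sublocale prob_space M
  by (intro prob_space_PiM prob_space_measure_pmf)

lemma abs_le_1: "\<bar>U i \<omega>\<bar> \<le> 1"
  using nonneg le_1 by (simp add: abs_le_iff)

lemma abs_diff_le_1: "\<bar>U i \<omega> - U j \<omega>\<bar> \<le> 1"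
  using nonneg[of i \<omega>] nonneg[of j \<omega>] le_1[of i \<omega>] le_1[of j \<omega>] by linarith

lemma prefix_determined_U: "i \<le> j \<Longrightarrow> prefix_determined (d j) (U i)"
  using prefix_determined_mono[OF determined] mono_d by (simp add: monoD)

lemma integrable_prefix_determined_M:
  fixes f :: "(nat \<Rightarrow> 'b) \<Rightarrow> real"
  assumes "prefix_determined m f" "\<And>\<omega>. \<bar>f \<omega>\<bar> \<le> B"
  shows "integrable M f"
  using assms by (rule integrable_prefix_determined)

lemma martingale_iter:
  assumes "i \<le> j" "prefix_determined (d i) g" "\<And>\<omega>. \<bar>g \<omega>\<bar> \<le> B"
  shows "(\<integral>\<omega>. g \<omega> * U j \<omega> \<partial>M) = (\<integral>\<omega>. g \<omega> * U i \<omega> \<partial>M)"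
  using assms(1)
proof (induction j rule: dec_induct)
  case (step j)
  have "prefix_determined (d j) g"
    using prefix_determined_mono[OF assms(2)] mono_d step.hyps by (simp add: monoD)
  then show ?case
    using martingale[OF _ assms(3)] step.IH by simp
qed simp

text \<open>The cross term vanishes because \<open>(U n - U i) * h\<close> is known at time \<open>n\<close>.\<close>
lemma integral_sq_increment_mono:
  assumes "i \<le> n" and h: "prefix_determined (d n) h" "\<And>\<omega>. 0 \<le> h \<omega>" "\<And>\<omega>. h \<omega> \<le> 1"
  shows "(\<integral>\<omega>. (U n \<omega> - U i \<omega>)\<^sup>2 * h \<omega> \<partial>M) \<le> (\<integral>\<omega>. (U (Suc n) \<omega> - U i \<omega>)\<^sup>2 * h \<omega> \<partial>M)"
proof -
  have det: "prefix_determined (d (Suc n)) h"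
    using prefix_determined_mono[OF h(1)] mono_d by (simp add: monoD)
  have h_abs: "\<bar>h \<omega>\<bar> \<le> 1" for \<omega>
    using h(2,3) by (simp add: abs_le_iff)
  have int: "integrable M (\<lambda>\<omega>. F (U i \<omega>) (U n \<omega>) (U (Suc n) \<omega>) (h \<omega>))"
    if "\<And>\<omega>. \<bar>F (U i \<omega>) (U n \<omega>) (U (Suc n) \<omega>) (h \<omega>)\<bar> \<le> 1"
    for F :: "real \<Rightarrow> real \<Rightarrow> real \<Rightarrow> real \<Rightarrow> real"
  proof (rule integrable_prefix_determined_M[OF _ that])
    show "prefix_determined (d (Suc n)) (\<lambda>\<omega>. F (U i \<omega>) (U n \<omega>) (U (Suc n) \<omega>) (h \<omega>))"
    proof (rule prefix_determinedI)
      fix \<omega> \<omega>' :: "nat \<Rightarrow> 'b"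
      assume agree: "\<And>l. l < d (Suc n) \<Longrightarrow> \<omega> l = \<omega>' l"
      have "U l \<omega> = U l \<omega>'" if "l \<le> Suc n" for l
        using prefix_determinedD[OF prefix_determined_U[OF that] agree] .
      moreover have "h \<omega> = h \<omega>'"
        using prefix_determinedD[OF det agree] .
      ultimately show "F (U i \<omega>) (U n \<omega>) (U (Suc n) \<omega>) (h \<omega>) = F (U i \<omega>') (U n \<omega>') (U (Suc n) \<omega>') (h \<omega>')"
        using assms(1) by simp
    qed
  qed
  have sq_le: "\<bar>(U a \<omega> - U b \<omega>)\<^sup>2\<bar> \<le> 1" for a b \<omega>
    using abs_diff_le_1 by (simp add: abs_square_le_1)
  have int_terms: "integrable M (\<lambda>\<omega>. (U n \<omega> - U i \<omega>)\<^sup>2 * h \<omega>)"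
    "integrable M (\<lambda>\<omega>. (U (Suc n) \<omega> - U n \<omega>)\<^sup>2 * h \<omega>)"
    "integrable M (\<lambda>\<omega>. (U n \<omega> - U i \<omega>) * h \<omega> * U (Suc n) \<omega>)"
    "integrable M (\<lambda>\<omega>. (U n \<omega> - U i \<omega>) * h \<omega> * U n \<omega>)"
    using abs_diff_le_1 abs_le_1 h_abs sq_le
    by (intro int; simp add: abs_mult mult_le_one)+
  have cross: "(\<integral>\<omega>. (U n \<omega> - U i \<omega>) * h \<omega> * U (Suc n) \<omega> \<partial>M)
      = (\<integral>\<omega>. (U n \<omega> - U i \<omega>) * h \<omega> * U n \<omega> \<partial>M)"
  proof (rule martingale[where B = 1])
    show "prefix_determined (d n) (\<lambda>\<omega>. (U n \<omega> - U i \<omega>) * h \<omega>)"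
      using prefix_determined_U[OF assms(1)] prefix_determined_U[OF order_refl] h(1)
      by (intro prefix_determined_comp2[where f = "(*)"] prefix_determined_comp2[where f = "(-)"])
    show "\<bar>(U n \<omega> - U i \<omega>) * h \<omega>\<bar> \<le> 1" for \<omega>
      using abs_diff_le_1 h_abs by (simp add: abs_mult mult_le_one)
  qed
  have "(\<integral>\<omega>. (U (Suc n) \<omega> - U i \<omega>)\<^sup>2 * h \<omega> \<partial>M)
      = (\<integral>\<omega>. (U n \<omega> - U i \<omega>)\<^sup>2 * h \<omega> + (U (Suc n) \<omega> - U n \<omega>)\<^sup>2 * h \<omega>
           + 2 * ((U n \<omega> - U i \<omega>) * h \<omega> * U (Suc n) \<omega> - (U n \<omega> - U i \<omega>) * h \<omega> * U n \<omega>) \<partial>M)"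
    by (intro Bochner_Integration.integral_cong) (auto simp: power2_eq_square algebra_simps)
  also have "\<dots> = (\<integral>\<omega>. (U n \<omega> - U i \<omega>)\<^sup>2 * h \<omega> \<partial>M) + (\<integral>\<omega>. (U (Suc n) \<omega> - U n \<omega>)\<^sup>2 * h \<omega> \<partial>M)"
    using cross int_terms by simp
  also have "\<dots> \<ge> (\<integral>\<omega>. (U n \<omega> - U i \<omega>)\<^sup>2 * h \<omega> \<partial>M)"
    using h(2) by (simp add: Bochner_Integration.integral_nonneg)
  finally show ?thesis .
qed

lemma integrable_U_sq: "integrable M (\<lambda>\<omega>. (U i \<omega>)\<^sup>2)"
  using abs_le_1
  by (intro integrable_prefix_determined_M[where B = 1, OF prefix_determined_comp[OF determined]])
     (simp add: abs_square_le_1)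

lemma integral_increment_sq:
  assumes "i \<le> j"
  shows "(\<integral>\<omega>. (U j \<omega> - U i \<omega>)\<^sup>2 \<partial>M) = (\<integral>\<omega>. (U j \<omega>)\<^sup>2 \<partial>M) - (\<integral>\<omega>. (U i \<omega>)\<^sup>2 \<partial>M)"
proof -
  have int_prod: "integrable M (\<lambda>\<omega>. U i \<omega> * U j \<omega>)"
    using abs_le_1
    by (intro integrable_prefix_determined_M[where B = 1,
          OF prefix_determined_comp2[OF prefix_determined_U[OF assms] prefix_determined_U[OF order_refl]]])
       (simp add: abs_mult mult_le_one)
  have cross: "(\<integral>\<omega>. U i \<omega> * U j \<omega> \<partial>M) = (\<integral>\<omega>. U i \<omega> * U i \<omega> \<partial>M)"
    by (rule martingale_iter[OF assms determined abs_le_1])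
  have "(\<integral>\<omega>. (U j \<omega> - U i \<omega>)\<^sup>2 \<partial>M) = (\<integral>\<omega>. (U j \<omega>)\<^sup>2 - 2 * (U i \<omega> * U j \<omega>) + (U i \<omega>)\<^sup>2 \<partial>M)"
    by (intro Bochner_Integration.integral_cong) (auto simp: power2_eq_square algebra_simps)
  also have "\<dots> = (\<integral>\<omega>. (U j \<omega>)\<^sup>2 \<partial>M) - 2 * (\<integral>\<omega>. U i \<omega> * U j \<omega> \<partial>M) + (\<integral>\<omega>. (U i \<omega>)\<^sup>2 \<partial>M)"
    using integrable_U_sq int_prod by simp
  finally show ?thesis
    using cross by (simp add: power2_eq_square)
qed

definition exceeds :: "real \<Rightarrow> nat \<Rightarrow> nat \<Rightarrow> (nat \<Rightarrow> 'b) \<Rightarrow> bool" where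
  "exceeds t i j \<omega> \<longleftrightarrow> (\<exists>l. i \<le> l \<and> l \<le> j \<and> t < \<bar>U l \<omega> - U i \<omega>\<bar>)"

lemma prefix_determined_exceeds:
  assumes "i \<le> j"
  shows "prefix_determined (d j) (exceeds t i j)"
proof (rule prefix_determinedI)
  fix \<omega> \<omega>' :: "nat \<Rightarrow> 'b"
  assume agree: "\<And>l. l < d j \<Longrightarrow> \<omega> l = \<omega>' l"
  have "U l \<omega> = U l \<omega>'" if "l \<le> j" for l
    using prefix_determinedD[OF prefix_determined_U[OF that] agree] .
  then show "exceeds t i j \<omega> = exceeds t i j \<omega>'"
    unfolding exceeds_def using assms by (metis order.trans)
qed

lemma prefix_determined_exceeds_U:
  assumes "i \<le> j" "j \<le> k"
  shows "prefix_determined (d k) (\<lambda>\<omega>. F (exceeds t i j \<omega>) (U i \<omega>) (U k \<omega>))"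
proof (rule prefix_determinedI)
  fix \<omega> \<omega>' :: "nat \<Rightarrow> 'b"
  assume agree: "\<And>l. l < d k \<Longrightarrow> \<omega> l = \<omega>' l"
  have "exceeds t i j \<omega> = exceeds t i j \<omega>'"
    using assms prefix_determined_mono[OF prefix_determined_exceeds] mono_d
    by (intro prefix_determinedD[OF _ agree]) (simp_all add: monoD)
  moreover have "U l \<omega> = U l \<omega>'" if "l \<le> k" for l
    using prefix_determinedD[OF prefix_determined_U[OF that] agree] .
  ultimately show "F (exceeds t i j \<omega>) (U i \<omega>) (U k \<omega>) = F (exceeds t i j \<omega>') (U i \<omega>') (U k \<omega>')"
    using assms by simp
qed

lemma sets_exceeds: "i \<le> j \<Longrightarrow> {\<omega>. exceeds t i j \<omega>} \<in> sets M"
  by (rule sets_prefix_determined[OF prefix_determined_exceeds])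

lemma exceeds_Suc:
  "i \<le> n \<Longrightarrow> exceeds t i (Suc n) \<omega> \<longleftrightarrow> exceeds t i n \<omega> \<or> t < \<bar>U (Suc n) \<omega> - U i \<omega>\<bar>"
  unfolding exceeds_def le_Suc_eq by (blast intro: le_SucI)

lemma not_exceeds_self: "0 < t \<Longrightarrow> \<not> exceeds t i i \<omega>"
  unfolding exceeds_def by (metis abs_zero diff_self le_antisym not_less_iff_gr_or_eq)

lemma exceeds_mono: "exceeds t i j \<omega> \<Longrightarrow> j \<le> j' \<Longrightarrow> exceeds t i j' \<omega>"
  unfolding exceeds_def by (meson order.trans)

text \<open>Doob's maximal inequality in \<open>L\<^sup>2\<close>, proved by splitting off the first exceedance.\<close>
lemma maximal_inequality_of_bool:
  assumes "0 < t" "i \<le> j"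
  shows "t\<^sup>2 * (\<integral>\<omega>. of_bool (exceeds t i j \<omega>) \<partial>M)
    \<le> (\<integral>\<omega>. (U j \<omega> - U i \<omega>)\<^sup>2 * of_bool (exceeds t i j \<omega>) \<partial>M)"
  using assms(2)
proof (induction j rule: dec_induct)
  case base
  then show ?case
    using assms(1) by (simp add: not_exceeds_self)
next
  case (step n)
  define b where "b \<omega> = (of_bool (exceeds t i n \<omega>) :: real)" for \<omega>
  define a where "a \<omega> = (of_bool (\<not> exceeds t i n \<omega> \<and> t < \<bar>U (Suc n) \<omega> - U i \<omega>\<bar>) :: real)" for \<omega>
  have split: "of_bool (exceeds t i (Suc n) \<omega>) = b \<omega> + a \<omega>" for \<omega>
    using exceeds_Suc[OF step.hyps(1)] by (auto simp: a_def b_def)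
  have sq_le: "\<bar>(U l \<omega> - U i \<omega>)\<^sup>2\<bar> \<le> 1" for l \<omega>
    using abs_diff_le_1 by (simp add: abs_square_le_1)
  have int: "integrable M a" "integrable M b"
    "integrable M (\<lambda>\<omega>. (U (Suc n) \<omega> - U i \<omega>)\<^sup>2 * a \<omega>)"
    "integrable M (\<lambda>\<omega>. (U (Suc n) \<omega> - U i \<omega>)\<^sup>2 * b \<omega>)"
    unfolding a_def b_def
    using step.hyps(1) sq_le
      prefix_determined_exceeds_U[of i n "Suc n" "\<lambda>e x z. of_bool (\<not> e \<and> t < \<bar>z - x\<bar>)"]
      prefix_determined_exceeds_U[of i n "Suc n" "\<lambda>e x z. of_bool e"]
      prefix_determined_exceeds_U[of i n "Suc n" "\<lambda>e x z. (z - x)\<^sup>2 * of_bool (\<not> e \<and> t < \<bar>z - x\<bar>)"]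
      prefix_determined_exceeds_U[of i n "Suc n" "\<lambda>e x z. (z - x)\<^sup>2 * of_bool e"]
    by (auto intro!: integrable_prefix_determined_M[where B = 1] simp: abs_mult mult_le_one)
  have "t\<^sup>2 * (\<integral>\<omega>. b \<omega> \<partial>M) \<le> (\<integral>\<omega>. (U n \<omega> - U i \<omega>)\<^sup>2 * b \<omega> \<partial>M)"
    using step.IH by (simp add: b_def)
  also have "\<dots> \<le> (\<integral>\<omega>. (U (Suc n) \<omega> - U i \<omega>)\<^sup>2 * b \<omega> \<partial>M)"
    unfolding b_def using step.hyps(1)
    by (intro integral_sq_increment_mono prefix_determined_comp[OF prefix_determined_exceeds]) auto
  finally have le_b: "t\<^sup>2 * (\<integral>\<omega>. b \<omega> \<partial>M) \<le> (\<integral>\<omega>. (U (Suc n) \<omega> - U i \<omega>)\<^sup>2 * b \<omega> \<partial>M)" .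
  have le_a: "(\<integral>\<omega>. t\<^sup>2 * a \<omega> \<partial>M) \<le> (\<integral>\<omega>. (U (Suc n) \<omega> - U i \<omega>)\<^sup>2 * a \<omega> \<partial>M)"
  proof (rule integral_mono[OF _ int(3)])
    show "integrable M (\<lambda>\<omega>. t\<^sup>2 * a \<omega>)"
      using int(1) by simp
    show "t\<^sup>2 * a \<omega> \<le> (U (Suc n) \<omega> - U i \<omega>)\<^sup>2 * a \<omega>" for \<omega>
    proof (cases "a \<omega> = 0")
      case False
      then have "t < \<bar>U (Suc n) \<omega> - U i \<omega>\<bar>" and a1: "a \<omega> = 1"
        by (auto simp: a_def)
      then have "t\<^sup>2 \<le> \<bar>U (Suc n) \<omega> - U i \<omega>\<bar>\<^sup>2"
        using assms(1) by (intro power_mono) auto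
      then show ?thesis
        using a1 by simp
    qed simp
  qed
  have "t\<^sup>2 * (\<integral>\<omega>. of_bool (exceeds t i (Suc n) \<omega>) \<partial>M) = t\<^sup>2 * (\<integral>\<omega>. b \<omega> \<partial>M) + (\<integral>\<omega>. t\<^sup>2 * a \<omega> \<partial>M)"
    using int(1,2) by (simp add: split distrib_left)
  also have "\<dots> \<le> (\<integral>\<omega>. (U (Suc n) \<omega> - U i \<omega>)\<^sup>2 * b \<omega> \<partial>M) + (\<integral>\<omega>. (U (Suc n) \<omega> - U i \<omega>)\<^sup>2 * a \<omega> \<partial>M)"
    using le_a le_b by simp
  also have "\<dots> = (\<integral>\<omega>. (U (Suc n) \<omega> - U i \<omega>)\<^sup>2 * of_bool (exceeds t i (Suc n) \<omega>) \<partial>M)"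
    using int(3,4) by (simp add: split distrib_left)
  finally show ?case .
qed

lemma prob_exceeds_le:
  assumes "0 < t" "i \<le> j"
  shows "prob {\<omega>. exceeds t i j \<omega>} \<le> ((\<integral>\<omega>. (U j \<omega>)\<^sup>2 \<partial>M) - (\<integral>\<omega>. (U i \<omega>)\<^sup>2 \<partial>M)) / t\<^sup>2"
proof -
  have "prob {\<omega>. exceeds t i j \<omega>} = (\<integral>\<omega>. indicator {\<omega>. exceeds t i j \<omega>} \<omega> \<partial>M)"
    using sets_exceeds[OF assms(2)] by simp
  then have "t\<^sup>2 * prob {\<omega>. exceeds t i j \<omega>} = t\<^sup>2 * (\<integral>\<omega>. of_bool (exceeds t i j \<omega>) \<partial>M)"
    by (simp add: indicator_def)
  also have "\<dots> \<le> (\<integral>\<omega>. (U j \<omega> - U i \<omega>)\<^sup>2 * of_bool (exceeds t i j \<omega>) \<partial>M)"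
    by (rule maximal_inequality_of_bool[OF assms])
  also have "\<dots> \<le> (\<integral>\<omega>. (U j \<omega> - U i \<omega>)\<^sup>2 \<partial>M)"
  proof (rule integral_mono)
    have "\<bar>(U j \<omega> - U i \<omega>)\<^sup>2\<bar> \<le> 1" for \<omega>
      using abs_diff_le_1 by (simp add: abs_square_le_1)
    then show "integrable M (\<lambda>\<omega>. (U j \<omega> - U i \<omega>)\<^sup>2 * of_bool (exceeds t i j \<omega>))"
      "integrable M (\<lambda>\<omega>. (U j \<omega> - U i \<omega>)\<^sup>2)"
      using assms(2) prefix_determined_exceeds_U[of i j j "\<lambda>e x z. (z - x)\<^sup>2 * of_bool e"]
        prefix_determined_exceeds_U[of i j j "\<lambda>e x z. (z - x)\<^sup>2"]
      by (auto intro!: integrable_prefix_determined_M[where B = 1] simp: abs_mult mult_le_one)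
  qed simp
  also have "\<dots> = (\<integral>\<omega>. (U j \<omega>)\<^sup>2 \<partial>M) - (\<integral>\<omega>. (U i \<omega>)\<^sup>2 \<partial>M)"
    by (rule integral_increment_sq[OF assms(2)])
  finally show ?thesis
    using assms(1) by (simp add: field_simps)
qed

lemma incseq_integral_U_sq: "incseq (\<lambda>i. \<integral>\<omega>. (U i \<omega>)\<^sup>2 \<partial>M)"
proof (rule incseq_SucI)
  fix i
  have "0 \<le> (\<integral>\<omega>. (U (Suc i) \<omega> - U i \<omega>)\<^sup>2 \<partial>M)"
    by simp
  then show "(\<integral>\<omega>. (U i \<omega>)\<^sup>2 \<partial>M) \<le> (\<integral>\<omega>. (U (Suc i) \<omega>)\<^sup>2 \<partial>M)"
    using integral_increment_sq[of i "Suc i"] by simp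
qed

lemma integral_U_sq_le_1: "(\<integral>\<omega>. (U i \<omega>)\<^sup>2 \<partial>M) \<le> 1"
proof -
  have "(\<integral>\<omega>. (U i \<omega>)\<^sup>2 \<partial>M) \<le> (\<integral>\<omega>. 1 \<partial>M)"
    using integrable_U_sq abs_le_1 by (intro integral_mono) (auto simp: abs_square_le_1)
  then show ?thesis
    by (simp add: prob_space)
qed

lemma prob_oscillating_eq_0:
  assumes "0 < t"
  shows "prob (\<Inter>i. \<Union>j. {\<omega>. exceeds t i (i + j) \<omega>}) = 0"
proof -
  let ?s = "\<lambda>i. \<integral>\<omega>. (U i \<omega>)\<^sup>2 \<partial>M"
  obtain L where L: "?s \<longlonglongrightarrow> L" "\<And>i. ?s i \<le> L"
    using incseq_convergent[OF incseq_integral_U_sq] integral_U_sq_le_1 by blast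
  have events: "{\<omega>. exceeds t i (i + j) \<omega>} \<in> events" for i j
    by (simp add: sets_exceeds)
  have bound: "prob (\<Union>j. {\<omega>. exceeds t i (i + j) \<omega>}) \<le> (L - ?s i) / t\<^sup>2" for i
  proof -
    have "(\<lambda>j. prob {\<omega>. exceeds t i (i + j) \<omega>}) \<longlonglongrightarrow> prob (\<Union>j. {\<omega>. exceeds t i (i + j) \<omega>})"
    proof (rule finite_Lim_measure_incseq)
      show "range (\<lambda>j. {\<omega>. exceeds t i (i + j) \<omega>}) \<subseteq> events"
        using events by auto
      show "incseq (\<lambda>j. {\<omega>. exceeds t i (i + j) \<omega>})"
      proof (rule incseq_SucI)
        show "{\<omega>. exceeds t i (i + j) \<omega>} \<subseteq> {\<omega>. exceeds t i (i + Suc j) \<omega>}" for j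
        proof (rule subsetI)
          fix \<omega> assume "\<omega> \<in> {\<omega>. exceeds t i (i + j) \<omega>}"
          then show "\<omega> \<in> {\<omega>. exceeds t i (i + Suc j) \<omega>}"
            using exceeds_mono[of t i "i + j" \<omega> "i + Suc j"] by simp
        qed
      qed
    qed
    moreover have "prob {\<omega>. exceeds t i (i + j) \<omega>} \<le> (L - ?s i) / t\<^sup>2" for j
    proof -
      have "prob {\<omega>. exceeds t i (i + j) \<omega>} \<le> (?s (i + j) - ?s i) / t\<^sup>2"
        using assms by (intro prob_exceeds_le) auto
      also have "\<dots> \<le> (L - ?s i) / t\<^sup>2"
        using L(2)[of "i + j"] by (intro divide_right_mono) auto
      finally show ?thesis .
    qed
    ultimately show ?thesis
      by (intro LIMSEQ_le_const2[where X = "\<lambda>j. prob {\<omega>. exceeds t i (i + j) \<omega>}"]) auto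
  qed
  have "prob (\<Inter>i. \<Union>j. {\<omega>. exceeds t i (i + j) \<omega>}) \<le> (L - ?s i) / t\<^sup>2" for i
  proof -
    have "prob (\<Inter>i. \<Union>j. {\<omega>. exceeds t i (i + j) \<omega>}) \<le> prob (\<Union>j. {\<omega>. exceeds t i (i + j) \<omega>})"
      using events by (intro finite_measure_mono) auto
    then show ?thesis
      using bound[of i] by linarith
  qed
  moreover have "(\<lambda>i. (L - ?s i) / t\<^sup>2) \<longlonglongrightarrow> 0"
    using tendsto_diff[OF tendsto_const L(1), of L] by (simp add: tendsto_divide_zero)
  ultimately have "prob (\<Inter>i. \<Union>j. {\<omega>. exceeds t i (i + j) \<omega>}) \<le> 0"
    by (intro LIMSEQ_le_const[where X = "\<lambda>i. (L - ?s i) / t\<^sup>2"]) auto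
  then show ?thesis
    by (simp add: antisym)
qed

theorem AE_convergent: "AE \<omega> in M. convergent (\<lambda>i. U i \<omega>)"
proof -
  define t where "t j = inverse (real (Suc j)) / 3" for j
  have t_pos: "0 < t j" for j
    by (simp add: t_def)
  have "AE \<omega> in M. \<forall>j. \<omega> \<notin> (\<Inter>i. \<Union>l. {\<omega>. exceeds (t j) i (i + l) \<omega>})"
  proof (subst AE_all_countable, intro allI AE_not_in null_setsI)
    fix j
    have "(\<Union>l. {\<omega>. exceeds (t j) i (i + l) \<omega>}) \<in> events" for i
      by (rule sets.countable_UN) (auto simp: sets_exceeds)
    then show "(\<Inter>i. \<Union>l. {\<omega>. exceeds (t j) i (i + l) \<omega>}) \<in> events"
      by (intro sets.countable_INT) auto
    then show "emeasure M (\<Inter>i. \<Union>l. {\<omega>. exceeds (t j) i (i + l) \<omega>}) = 0"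
      using prob_oscillating_eq_0[OF t_pos] by (simp add: emeasure_eq_measure)
  qed
  then show ?thesis
  proof (rule AE_mp, intro AE_I2 impI)
    fix \<omega>
    assume calm: "\<forall>j. \<omega> \<notin> (\<Inter>i. \<Union>l. {\<omega>. exceeds (t j) i (i + l) \<omega>})"
    have "\<exists>i. \<forall>m\<ge>i. \<forall>n\<ge>i. \<bar>U m \<omega> - U n \<omega>\<bar> < inverse (real (Suc j))" for j
    proof -
      obtain i where "\<And>l. \<not> exceeds (t j) i (i + l) \<omega>"
        using calm by blast
      then have "\<bar>U m \<omega> - U i \<omega>\<bar> \<le> t j" if "i \<le> m" for m
        using that unfolding exceeds_def by (metis le_add_diff_inverse not_less order_refl)
      then have "\<bar>U m \<omega> - U n \<omega>\<bar> \<le> 2 * t j" if "i \<le> m" "i \<le> n" for m n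
        using that[THEN \<open>\<And>m. i \<le> m \<Longrightarrow> \<bar>U m \<omega> - U i \<omega>\<bar> \<le> t j\<close>] by (simp add: abs_le_iff)
      moreover have "2 * t j < inverse (real (Suc j))"
        by (simp add: t_def)
      ultimately show ?thesis
        by (meson le_less_trans)
    qed
    then have "Cauchy (\<lambda>i. U i \<omega>)"
      unfolding Cauchy_iff2 by blast
    then show "convergent (\<lambda>i. U i \<omega>)"
      by (simp add: Cauchy_convergent_iff)
  qed
qed

end

section \<open>Elementary estimates\<close>

definition rising_prod :: "real \<Rightarrow> nat \<Rightarrow> nat \<Rightarrow> real" where
  "rising_prod \<alpha> a b = (\<Prod>i\<in>{a..<b}. (1 + \<alpha> / real i))"

text \<open>The solution of the recursion \<open>var_sum_Suc\<close> that vanishes at \<open>n = k\<close>; it controls the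
  \<open>Qfrac\<close>-weighted variance of \<open>num_upto k n\<close>.\<close>
definition var_sum :: "real \<Rightarrow> nat \<Rightarrow> nat \<Rightarrow> real" where
  "var_sum \<beta> k n =
     (\<Sum>m\<in>{k..<n}. \<beta> * real k * rising_prod \<beta> k m / real m * rising_prod (2 * \<beta>) (m + 1) n)"

lemma rising_prod_Suc: "a \<le> b \<Longrightarrow> rising_prod \<alpha> a (Suc b) = rising_prod \<alpha> a b * (1 + \<alpha> / real b)"
  unfolding rising_prod_def by (rule prod.atLeastLessThan_Suc)

lemma rising_prod_self[simp]: "rising_prod \<alpha> a a = 1"
  unfolding rising_prod_def by simp

lemma rising_prod_nonneg: "0 \<le> \<alpha> \<Longrightarrow> 0 \<le> rising_prod \<alpha> a b"
  unfolding rising_prod_def by (intro prod_nonneg) auto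

lemma var_sum_Suc:
  "k \<le> n \<Longrightarrow> var_sum \<beta> k (Suc n)
     = (1 + 2 * \<beta> / real n) * var_sum \<beta> k n + \<beta> * real k * rising_prod \<beta> k n / real n"
proof -
  assume kn: "k \<le> n"
  have "var_sum \<beta> k (Suc n) = (\<Sum>m\<in>{k..<n}. \<beta> * real k * rising_prod \<beta> k m / real m * rising_prod (2 * \<beta>) (m + 1) (Suc n))
      + \<beta> * real k * rising_prod \<beta> k n / real n * rising_prod (2 * \<beta>) (n + 1) (Suc n)"
    unfolding var_sum_def using kn by (simp add: sum.atLeastLessThan_Suc)
  also have "(\<Sum>m\<in>{k..<n}. \<beta> * real k * rising_prod \<beta> k m / real m * rising_prod (2 * \<beta>) (m + 1) (Suc n))
      = (\<Sum>m\<in>{k..<n}. (1 + 2 * \<beta> / real n) * (\<beta> * real k * rising_prod \<beta> k m / real m * rising_prod (2 * \<beta>) (m + 1) n))"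
    by (rule sum.cong[OF refl]) (simp add: rising_prod_Suc)
  also have "\<dots> = (1 + 2 * \<beta> / real n) * var_sum \<beta> k n"
    unfolding var_sum_def by (simp add: sum_distrib_left)
  finally show ?thesis by simp
qed

lemma var_sum_nonneg: "0 \<le> \<beta> \<Longrightarrow> 0 \<le> var_sum \<beta> k n"
  unfolding var_sum_def by (intro sum_nonneg mult_nonneg_nonneg divide_nonneg_nonneg rising_prod_nonneg) auto

lemma inverse_Suc_le_ln: "1 \<le> b \<Longrightarrow> 1 / (real b + 1) \<le> ln ((real b + 1) / real b)"
proof -
  assume b: "1 \<le> b"
  have "ln (real b / (real b + 1)) \<le> real b / (real b + 1) - 1"
    using b by (intro ln_le_minus_one) auto
  also have "\<dots> = - (1 / (real b + 1))" using b by (simp add: field_simps)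
  finally have "ln (real b / (real b + 1)) \<le> - (1 / (real b + 1))" .
  moreover have "ln (real b / (real b + 1)) = - ln ((real b + 1) / real b)"
    using b by (simp add: ln_div)
  ultimately show ?thesis by simp
qed

lemma sum_inverse_le_ln:
  assumes "1 \<le> a" "a \<le> b"
  shows "(\<Sum>i\<in>{a..b}. 1 / real i) \<le> 1 / real a + ln (real b / real a)"
  using assms(2)
proof (induction b rule: dec_induct)
  case base then show ?case by simp
next
  case (step b)
  have b: "1 \<le> b" using step assms by simp
  have "(\<Sum>i\<in>{a..Suc b}. 1 / real i) = (\<Sum>i\<in>{a..b}. 1 / real i) + 1 / (real b + 1)"
    using step by (simp add: sum.cl_ivl_Suc add.commute)
  also have "\<dots> \<le> 1 / real a + (ln (real b / real a) + ln ((real b + 1) / real b))"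
    using step.IH inverse_Suc_le_ln[OF b] by simp
  also have "ln (real b / real a) + ln ((real b + 1) / real b) = ln ((real b + 1) / real a)"
    using b assms by (simp add: ln_div)
  finally show ?case by (simp add: add.commute)
qed

lemma rising_prod_le:
  assumes "0 \<le> \<alpha>" "1 \<le> a" "a \<le> b"
  shows "rising_prod \<alpha> a b \<le> exp (\<alpha> / real a) * (real b / real a) powr \<alpha>"
proof -
  have "rising_prod \<alpha> a b \<le> (\<Prod>i\<in>{a..<b}. exp (\<alpha> / real i))"
    unfolding rising_prod_def by (intro prod_mono) (use assms in \<open>auto simp: exp_ge_add_one_self\<close>)
  also have "\<dots> = exp (\<alpha> * (\<Sum>i\<in>{a..<b}. 1 / real i))"
    by (simp add: exp_sum sum_distrib_left)
  also have "\<dots> \<le> exp (\<alpha> * (1 / real a + ln (real b / real a)))"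
  proof -
    have "(\<Sum>i\<in>{a..<b}. 1 / real i) \<le> (\<Sum>i\<in>{a..b}. 1 / real i)"
      by (rule sum_mono2) auto
    also have "\<dots> \<le> 1 / real a + ln (real b / real a)" by (rule sum_inverse_le_ln[OF assms(2,3)])
    finally show ?thesis using assms(1) by (intro exp_le_cancel_iff[THEN iffD2] mult_left_mono) auto
  qed
  also have "\<dots> = exp (\<alpha> / real a) * (real b / real a) powr \<alpha>"
    using assms by (simp add: powr_def distrib_left exp_add mult.commute)
  finally show ?thesis .
qed

lemma rising_prod_ge:
  assumes "0 \<le> \<beta>" "\<beta> \<le> 1" "1 \<le> a" "a \<le> b"
  shows "(real b / real a) powr \<beta> \<le> rising_prod \<beta> a b"
  using assms(4)
proof (induction b rule: dec_induct)
  case base then show ?case using assms by simp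
next
  case (step b)
  have b: "1 \<le> b" using step assms by simp
  have y: "((real b + 1) / real b) powr \<beta> \<le> 1 + \<beta> / real b"
  proof -
    have "((real b + 1) / real b) powr \<beta> * 1 powr (1 - \<beta>) \<le> \<beta> * ((real b + 1) / real b) + (1 - \<beta>) * 1"
      by (rule Youngs_inequality_0) (use assms b in auto)
    also have "\<dots> = 1 + \<beta> / real b" using b by (simp add: field_simps)
    finally show ?thesis by simp
  qed
  have "(real (Suc b) / real a) powr \<beta> = (real b / real a) powr \<beta> * ((real b + 1) / real b) powr \<beta>"
  proof -
    have eq: "real (Suc b) / real a = (real b / real a) * ((real b + 1) / real b)"
      using b assms by (simp add: field_simps)
    have "(real (Suc b) / real a) powr \<beta> = ((real b / real a) * ((real b + 1) / real b)) powr \<beta>"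
      by (simp only: eq)
    also have "\<dots> = (real b / real a) powr \<beta> * ((real b + 1) / real b) powr \<beta>"
      by (rule powr_mult)
    finally show ?thesis .
  qed
  also have "\<dots> \<le> rising_prod \<beta> a b * (1 + \<beta> / real b)"
    using step.IH y rising_prod_nonneg[of \<beta> a b] assms by (intro mult_mono) auto
  also have "\<dots> = rising_prod \<beta> a (Suc b)" using step by (simp add: rising_prod_Suc)
  finally show ?case .
qed

lemma powr_tail_step:
  fixes x \<eta> :: real
  assumes "1 \<le> x" "0 < \<eta>"
  shows "(x + 1) powr (-(1 + \<eta>)) \<le> (x powr (-\<eta>) - (x + 1) powr (-\<eta>)) / \<eta>"
proof -
  let ?y = "x + 1"
  have y0: "0 < ?y" using assms by simp
  have y1: "0 < x" using assms by simp
  note y = y0 y1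
  have "ln (x / ?y) \<le> x / ?y - 1" using y by (intro ln_le_minus_one) auto
  also have "\<dots> = - (1 / ?y)" using y by (simp add: field_simps)
  finally have l: "ln (x / ?y) \<le> - (1 / ?y)" .
  have "1 + \<eta> / ?y \<le> exp (\<eta> / ?y)" by (rule exp_ge_add_one_self)
  also have "\<dots> \<le> exp (- \<eta> * ln (x / ?y))"
  proof -
    have "\<eta> * (1 / ?y) \<le> \<eta> * (- ln (x / ?y))" by (rule mult_left_mono) (use l assms in auto)
    then show ?thesis by simp
  qed
  also have "\<dots> = (x / ?y) powr (- \<eta>)" using y by (simp add: powr_def mult.commute)
  finally have A: "1 + \<eta> / ?y \<le> (x / ?y) powr (- \<eta>)" .
  have B: "x powr (-\<eta>) = ?y powr (-\<eta>) * (x / ?y) powr (-\<eta>)"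
  proof -
    have "x = ?y * (x / ?y)" using y by simp
    then have "x powr (-\<eta>) = (?y * (x / ?y)) powr (-\<eta>)" by (rule arg_cong)
    also have "\<dots> = ?y powr (-\<eta>) * (x / ?y) powr (-\<eta>)" by (rule powr_mult)
    finally show ?thesis .
  qed
  have C: "?y powr (-(1 + \<eta>)) = ?y powr (-\<eta>) / ?y"
  proof -
    have "-(1 + \<eta>) = -\<eta> - 1" by simp
    then have "?y powr (-(1 + \<eta>)) = ?y powr (-\<eta> - 1)" by (rule arg_cong)
    also have "\<dots> = ?y powr (-\<eta>) / ?y powr 1" by (rule powr_diff)
    also have "\<dots> = ?y powr (-\<eta>) / ?y" using y by simp
    finally show ?thesis .
  qed
  have "?y powr (-\<eta>) * (1 + \<eta> / ?y) \<le> ?y powr (-\<eta>) * (x / ?y) powr (- \<eta>)"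
    by (rule mult_left_mono[OF A]) simp
  then have "?y powr (-\<eta>) + \<eta> * (?y powr (-\<eta>) / ?y) \<le> x powr (-\<eta>)"
    using B by (simp add: algebra_simps)
  then have "\<eta> * ?y powr (-(1 + \<eta>)) \<le> x powr (-\<eta>) - ?y powr (-\<eta>)" using C by simp
  then show ?thesis using assms by (simp add: field_simps)
qed

lemma sum_powr_tail_le:
  fixes \<eta> :: real
  assumes "1 \<le> m" "0 < \<eta>"
  shows "(\<Sum>n\<in>{m..M}. real n powr (-(1 + \<eta>))) \<le> (1 + 1 / \<eta>) * real m powr (-\<eta>)"
proof (cases "m \<le> M")
  case False
  then have "{m..M} = {}" by auto
  then show ?thesis using assms by simp
next
  case True
  have claim: "(\<Sum>n\<in>{m..M}. real n powr (-(1 + \<eta>))) \<le> real m powr (-(1 + \<eta>)) + (real m powr (-\<eta>) - real M powr (-\<eta>)) / \<eta>"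
    using True
  proof (induction M rule: dec_induct)
    case base then show ?case by simp
  next
    case (step M)
    have M: "1 \<le> real M" using step assms by simp
    have "(\<Sum>n\<in>{m..Suc M}. real n powr (-(1 + \<eta>))) = (\<Sum>n\<in>{m..M}. real n powr (-(1 + \<eta>))) + (real M + 1) powr (-(1 + \<eta>))"
      using step by (simp add: sum.cl_ivl_Suc add.commute)
    also have "\<dots> \<le> real m powr (-(1 + \<eta>)) + (real m powr (-\<eta>) - real M powr (-\<eta>)) / \<eta>
         + (real M powr (-\<eta>) - (real M + 1) powr (-\<eta>)) / \<eta>"
      using step.IH powr_tail_step[OF M assms(2)] by simp
    also have "\<dots> = real m powr (-(1 + \<eta>)) + (real m powr (-\<eta>) - real (Suc M) powr (-\<eta>)) / \<eta>"
      by (simp add: diff_divide_distrib add.commute)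
    finally show ?case .
  qed
  also have "\<dots> \<le> real m powr (-\<eta>) + real m powr (-\<eta>) / \<eta>"
  proof -
    have "real m powr (-(1 + \<eta>)) \<le> real m powr (-\<eta>)" using assms by (intro powr_mono) auto
    moreover have "(real m powr (-\<eta>) - real M powr (-\<eta>)) / \<eta> \<le> real m powr (-\<eta>) / \<eta>"
      using assms by (intro divide_right_mono) auto
    ultimately show ?thesis by simp
  qed
  also have "\<dots> = (1 + 1 / \<eta>) * real m powr (-\<eta>)" by (simp add: algebra_simps)
  finally show ?thesis .
qed

lemma exp_minus_one_le_mult_exp: "0 \<le> (x::real) \<Longrightarrow> exp x - 1 \<le> x * exp x"
proof -
  assume x: "0 \<le> x"
  have "1 - x \<le> exp (- x)" using exp_ge_add_one_self[of "-x"] by simp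
  then have "(1 - x) * exp x \<le> exp (- x) * exp x" by (rule mult_right_mono) simp
  then have "(1 - x) * exp x \<le> 1" by (simp add: exp_minus field_simps)
  then show ?thesis by (simp add: algebra_simps)
qed

lemma rising_prod_le_exp:
  assumes "0 \<le> \<alpha>" "1 \<le> a" "a \<le> b"
  shows "rising_prod \<alpha> a b \<le> exp \<alpha> * (real b / real a) powr \<alpha>"
proof -
  have "exp (\<alpha> / real a) \<le> exp \<alpha>"
    using assms by (simp add: divide_le_eq mult_le_cancel_left1)
  then show ?thesis
    using rising_prod_le[OF assms] by (meson mult_right_mono order_trans powr_ge_zero)
qed

lemma var_sum_term_le:
  assumes b: "0 < \<beta>" "\<beta> \<le> 1" and m: "1 \<le> k" "k \<le> m" "m < N"
  shows "\<beta> * real k * rising_prod \<beta> k m / real m * rising_prod (2 * \<beta>) (m + 1) N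
    \<le> \<beta> * exp 1 ^ 3 * (real k powr (1 - \<beta>) * real N powr (2 * \<beta>)) * real m powr (-(1 + \<beta>))"
proof -
  have P1: "rising_prod \<beta> k m \<le> exp 1 * (real m / real k) powr \<beta>"
    using rising_prod_le_exp[of \<beta> k m] b m by (meson exp_le_cancel_iff less_imp_le mult_right_mono
        order_trans powr_ge_zero)
  have "rising_prod (2 * \<beta>) (m + 1) N \<le> exp (2 * \<beta>) * (real N / real (m + 1)) powr (2 * \<beta>)"
    using b m by (intro rising_prod_le_exp) auto
  also have "\<dots> \<le> exp 1 ^ 2 * (real N / real m) powr (2 * \<beta>)"
  proof (rule mult_mono)
    show "exp (2 * \<beta>) \<le> exp 1 ^ 2"
      unfolding exp_double using b by (intro power_mono) auto
    show "(real N / real (m + 1)) powr (2 * \<beta>) \<le> (real N / real m) powr (2 * \<beta>)"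
      using b m by (intro powr_mono2) (auto simp: frac_le)
  qed simp_all
  finally have P2: "rising_prod (2 * \<beta>) (m + 1) N \<le> exp 1 ^ 2 * (real N / real m) powr (2 * \<beta>)" .
  have "\<beta> * real k * rising_prod \<beta> k m / real m * rising_prod (2 * \<beta>) (m + 1) N
      \<le> \<beta> * real k * (exp 1 * (real m / real k) powr \<beta>) / real m * (exp 1 ^ 2 * (real N / real m) powr (2 * \<beta>))"
    using P1 P2 b m rising_prod_nonneg[of \<beta> k m] rising_prod_nonneg[of "2 * \<beta>" "m + 1" N]
    by (intro mult_mono divide_right_mono mult_left_mono) auto
  also have "\<dots> = \<beta> * exp 1 ^ 3 * (real k * (real m / real k) powr \<beta> / real m * (real N / real m) powr (2 * \<beta>))"
    by (simp add: power3_eq_cube power2_eq_square algebra_simps)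
  also have "real k * (real m / real k) powr \<beta> / real m * (real N / real m) powr (2 * \<beta>)
      = real k powr (1 - \<beta>) * real N powr (2 * \<beta>) * real m powr (-(1 + \<beta>))"
    using m by (subst ln_inj_iff[symmetric]) (simp_all add: ln_mult ln_div ln_powr algebra_simps)
  finally show ?thesis
    by (simp add: algebra_simps)
qed

lemma var_sum_le:
  assumes b: "0 < \<beta>" "\<beta> \<le> 1" and k: "1 \<le> k" "k \<le> N"
  shows "var_sum \<beta> k N \<le> exp 1 ^ 3 * (\<beta> + 1) * (real k * (real N / real k) powr (2 * \<beta>))"
proof -
  let ?c = "\<beta> * exp 1 ^ 3 * (real k powr (1 - \<beta>) * real N powr (2 * \<beta>))"
  have "var_sum \<beta> k N \<le> (\<Sum>m\<in>{k..<N}. ?c * real m powr (-(1 + \<beta>)))"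
    unfolding var_sum_def using b k by (intro sum_mono var_sum_term_le) auto
  also have "\<dots> \<le> (\<Sum>m\<in>{k..N}. ?c * real m powr (-(1 + \<beta>)))"
    using b by (intro sum_mono2) auto
  also have "\<dots> = ?c * (\<Sum>m\<in>{k..N}. real m powr (-(1 + \<beta>)))" by (simp add: sum_distrib_left)
  also have "\<dots> \<le> ?c * ((1 + 1 / \<beta>) * real k powr (-\<beta>))"
    using sum_powr_tail_le[OF k(1) b(1), of N] b by (intro mult_left_mono) auto
  also have "\<dots> = exp 1 ^ 3 * (\<beta> + 1) * (real k powr (1 - \<beta>) * real k powr (-\<beta>) * real N powr (2 * \<beta>))"
    using b by (simp add: field_simps)
  also have "real k powr (1 - \<beta>) * real k powr (-\<beta>) * real N powr (2 * \<beta>) = real k * (real N / real k) powr (2 * \<beta>)"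
    using k by (subst ln_inj_iff[symmetric]) (simp_all add: ln_mult ln_div ln_powr algebra_simps)
  finally show ?thesis .
qed

lemma rising_prod_minus_powr_sq_le:
  assumes b: "0 < \<beta>" "\<beta> \<le> 1" and k: "1 \<le> k" "k \<le> N"
  shows "(real k)\<^sup>2 * (rising_prod \<beta> k N - (real N / real k) powr \<beta>)\<^sup>2 \<le> exp 1 ^ 2 * (real N / real k) powr (2 * \<beta>)"
proof -
  let ?t = "(real N / real k) powr \<beta>"
  have lo: "?t \<le> rising_prod \<beta> k N" by (rule rising_prod_ge) (use b k in auto)
  have hi: "rising_prod \<beta> k N \<le> exp (\<beta> / real k) * ?t" by (rule rising_prod_le) (use b k in auto)
  have x: "0 \<le> \<beta> / real k" "\<beta> / real k \<le> 1" using b k by (auto simp: divide_le_eq_1)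
  have "exp (\<beta> / real k) - 1 \<le> \<beta> / real k * exp (\<beta> / real k)" by (rule exp_minus_one_le_mult_exp[OF x(1)])
  also have "\<dots> \<le> 1 / real k * exp 1"
    using x b k by (intro mult_mono divide_right_mono) auto
  finally have ex: "exp (\<beta> / real k) - 1 \<le> exp 1 / real k" by simp
  have "rising_prod \<beta> k N - ?t \<le> (exp (\<beta> / real k) - 1) * ?t" using hi by (simp add: algebra_simps)
  also have "\<dots> \<le> exp 1 / real k * ?t" by (rule mult_right_mono[OF ex]) simp
  finally have d: "0 \<le> rising_prod \<beta> k N - ?t" "rising_prod \<beta> k N - ?t \<le> exp 1 / real k * ?t" using lo by auto
  have "(real k)\<^sup>2 * (rising_prod \<beta> k N - ?t)\<^sup>2 = (real k * (rising_prod \<beta> k N - ?t))\<^sup>2"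
    by (simp add: power_mult_distrib)
  also have "\<dots> \<le> (real k * (exp 1 / real k * ?t))\<^sup>2"
    using d k by (intro power_mono mult_left_mono) auto
  also have "\<dots> = exp 1 ^ 2 * ?t\<^sup>2" using k by (simp add: power_mult_distrib)
  also have "?t\<^sup>2 = (real N / real k) powr (2 * \<beta>)"
    by (simp add: power2_eq_square powr_add[symmetric])
  finally show ?thesis .
qed

lemma sum_scaled_powr_tail_le:
  assumes g: "1 < \<gamma>" and u: "0 < u" and m: "1 \<le> m" "u powr (2 / \<gamma>) \<le> real m"
  shows "(\<Sum>k\<in>{m..N}. u\<^sup>2 * real k powr (-\<gamma>)) \<le> (1 + 1 / (\<gamma> - 1)) * u powr (2 / \<gamma>)"
proof -
  define A where "A = u powr (2 / \<gamma>)"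
  have A: "0 < A"
    unfolding A_def using u by simp
  have "u\<^sup>2 = A powr \<gamma>"
    using g u by (simp add: A_def powr_powr flip: powr_numeral)
  then have uA: "u\<^sup>2 * A powr (1 - \<gamma>) = A"
    using A by (simp flip: powr_add)
  have "(\<Sum>k\<in>{m..N}. u\<^sup>2 * real k powr (-\<gamma>)) = u\<^sup>2 * (\<Sum>k\<in>{m..N}. real k powr (-(1 + (\<gamma> - 1))))"
    by (simp add: sum_distrib_left)
  also have "\<dots> \<le> u\<^sup>2 * ((1 + 1 / (\<gamma> - 1)) * real m powr (1 - \<gamma>))"
    using sum_powr_tail_le[OF m(1), of "\<gamma> - 1" N] g by (intro mult_left_mono) simp_all
  also have "\<dots> \<le> u\<^sup>2 * ((1 + 1 / (\<gamma> - 1)) * A powr (1 - \<gamma>))"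
    using g A m(2) by (intro mult_left_mono powr_mono2') (simp_all add: A_def)
  also have "\<dots> = (1 + 1 / (\<gamma> - 1)) * A"
    using uA by (simp add: algebra_simps)
  finally show ?thesis
    by (simp add: A_def)
qed

text \<open>Split at \<open>k \<approx> u powr (2 / \<gamma>)\<close>, where the two bounds on \<open>p k\<close> cross.\<close>
lemma sum_min_power_le:
  fixes p :: "nat \<Rightarrow> real" and u B \<gamma> :: real
  assumes g: "1 < \<gamma>" and u: "0 < u" and B: "0 \<le> B"
    and p1: "\<And>k. k \<in> {1..N} \<Longrightarrow> p k \<le> 1"
    and p2: "\<And>k. k \<in> {1..N} \<Longrightarrow> p k \<le> B * u\<^sup>2 * real k powr (-\<gamma>)"
  shows "(\<Sum>k=1..N. p k) \<le> (1 + B * (1 + 1 / (\<gamma> - 1))) * u powr (2 / \<gamma>)"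
proof -
  define A where "A = u powr (2 / \<gamma>)"
  define m where "m = nat \<lfloor>A\<rfloor> + 1"
  have A: "0 < A" "real (nat \<lfloor>A\<rfloor>) \<le> A"
    unfolding A_def using u by simp_all
  have m: "1 \<le> m" "A \<le> real m"
    unfolding m_def using A by linarith+
  have "(\<Sum>k\<in>{1..N} \<inter> {..<m}. p k) \<le> real (card ({1..N} \<inter> {..<m}))"
    using p1 sum_mono[of "{1..N} \<inter> {..<m}" p "\<lambda>_. 1"] by simp
  also have "\<dots> \<le> real (nat \<lfloor>A\<rfloor>)"
  proof -
    have "card ({1..N} \<inter> {..<m}) \<le> card {1..<m}"
      by (rule card_mono) auto
    then show ?thesis
      by (simp add: m_def)
  qed
  also have "\<dots> \<le> A"
    by (rule A(2))
  finally have head: "(\<Sum>k\<in>{1..N} \<inter> {..<m}. p k) \<le> A" .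
  have "(\<Sum>k\<in>{1..N} - {..<m}. p k) \<le> (\<Sum>k\<in>{m..N}. B * (u\<^sup>2 * real k powr (-\<gamma>)))"
    using p2 B by (intro order_trans[OF sum_mono sum_mono2]) (auto simp: mult.assoc)
  also have "\<dots> \<le> B * ((1 + 1 / (\<gamma> - 1)) * A)"
    unfolding A_def using sum_scaled_powr_tail_le[OF g u m[unfolded A_def]] B
    by (simp add: mult_left_mono flip: sum_distrib_left)
  finally have tail: "(\<Sum>k\<in>{1..N} - {..<m}. p k) \<le> B * ((1 + 1 / (\<gamma> - 1)) * A)" .
  have "(\<Sum>k=1..N. p k) = (\<Sum>k\<in>{1..N} \<inter> {..<m}. p k) + (\<Sum>k\<in>{1..N} - {..<m}. p k)"
    by (rule sum.Int_Diff) simp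
  also have "\<dots> \<le> (1 + B * (1 + 1 / (\<gamma> - 1))) * A"
    using head tail by (simp add: algebra_simps)
  finally show ?thesis
    by (simp add: A_def)
qed

section \<open>One step of the Yule process\<close>

lemma length_types [simp]: "length (types \<omega> n) = n"
  by (induction n) (auto simp: Let_def)

lemma take_types: "m \<le> n \<Longrightarrow> take m (types \<omega> n) = types \<omega> m"
proof (induction n)
  case (Suc n)
  then show ?case
    by (cases "m = Suc n") (auto simp: Let_def)
qed simp

lemma nth_types: "1 \<le> i \<Longrightarrow> i \<le> n \<Longrightarrow> types \<omega> n ! (i - 1) = ind_type \<omega> i"
  by (metis ind_type_def diff_less less_numeral_extra(1) less_le_trans nth_take take_types)

lemma ind_type_1 [simp]: "ind_type \<omega> (Suc 0) = 1"
  by (simp add: ind_type_def)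

lemma ind_type_Suc:
  "1 \<le> n \<Longrightarrow> ind_type \<omega> (Suc n) =
     (if snd (\<omega> (n - 1)) then n + 1
      else let p = fst (\<omega> (n - 1)) in if 1 \<le> p \<and> p \<le> n then ind_type \<omega> p else 1)"
  using nth_types[of "fst (\<omega> (n - 1))" n \<omega>]
  by (auto simp: ind_type_def Let_def nth_append)

lemma ind_type_between: "1 \<le> i \<Longrightarrow> ind_type \<omega> i \<in> {1..i}"
proof (induction i rule: less_induct)
  case (less i)
  show ?case
  proof (cases "i = 1")
    case False
    then obtain n where "i = Suc n" "1 \<le> n"
      using less.prems by (cases i) auto
    then show ?thesis
      using less.IH[of "fst (\<omega> (n - 1))"] by (auto simp: ind_type_Suc Let_def)
  qed simp
qed

lemma prefix_determined_types: "prefix_determined (n - 1) (\<lambda>\<omega>. types \<omega> n)"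
proof (induction n)
  case (Suc n)
  show ?case
  proof (rule prefix_determinedI)
    fix \<omega> \<omega>' :: "nat \<Rightarrow> nat \<times> bool"
    assume agree: "\<And>i. i < Suc n - 1 \<Longrightarrow> \<omega> i = \<omega>' i"
    then have "types \<omega> n = types \<omega>' n"
      by (intro prefix_determinedD[OF Suc.IH]) auto
    moreover have "n \<noteq> 0 \<Longrightarrow> \<omega> (n - 1) = \<omega>' (n - 1)"
      using agree by auto
    ultimately show "types \<omega> (Suc n) = types \<omega>' (Suc n)"
      by (auto simp: Let_def)
  qed
qed (simp add: prefix_determined_def)

lemma prefix_determined_ind_type: "i \<le> n \<Longrightarrow> prefix_determined (n - 1) (\<lambda>\<omega>. ind_type \<omega> i)"
  unfolding ind_type_def
  by (rule prefix_determined_mono[OF prefix_determined_comp[OF prefix_determined_types[of i]]]) auto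

definition num_upto :: "nat \<Rightarrow> nat \<Rightarrow> (nat \<Rightarrow> nat \<times> bool) \<Rightarrow> nat" where
  "num_upto k n \<omega> = card {i \<in> {1..n}. ind_type \<omega> i \<in> {1..k}}"

definition num_type :: "nat \<Rightarrow> nat \<Rightarrow> (nat \<Rightarrow> nat \<times> bool) \<Rightarrow> nat" where
  "num_type k n \<omega> = card {i \<in> {1..n}. ind_type \<omega> i = k}"

lemma Xfrac_eq: "Xfrac k n \<omega> = real (num_upto k n \<omega>) / real n"
  by (simp add: Xfrac_def num_upto_def)

lemma Vfrac_eq: "Vfrac k n \<omega> = real (num_type k n \<omega>) / real (num_upto k n \<omega>)"
  by (simp add: Vfrac_def num_type_def num_upto_def)

lemma card_filter_atLeastAtMost_Suc:
  "card {i \<in> {1..Suc n}. P i} = card {i \<in> {1..n}. P i} + (if P (Suc n) then 1 else 0)"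
proof -
  have "{i \<in> {1..Suc n}. P i} = {i \<in> {1..n}. P i} \<union> (if P (Suc n) then {Suc n} else {})"
    by (auto simp: le_Suc_eq)
  then show ?thesis
    by (auto simp: card_insert_if)
qed

lemma num_upto_Suc:
  "num_upto k (Suc n) \<omega> = num_upto k n \<omega> + (if ind_type \<omega> (Suc n) \<in> {1..k} then 1 else 0)"
  unfolding num_upto_def by (rule card_filter_atLeastAtMost_Suc)

lemma num_type_Suc:
  "num_type k (Suc n) \<omega> = num_type k n \<omega> + (if ind_type \<omega> (Suc n) = k then 1 else 0)"
  unfolding num_type_def by (rule card_filter_atLeastAtMost_Suc)

lemma num_upto_le: "num_upto k n \<omega> \<le> n"
  unfolding num_upto_def by (metis (no_types, lifting) card_atLeastAtMost card_mono diff_Suc_1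
      finite_atLeastAtMost mem_Collect_eq subsetI)

lemma num_type_le_num_upto: "1 \<le> k \<Longrightarrow> num_type k n \<omega> \<le> num_upto k n \<omega>"
  unfolding num_upto_def num_type_def by (rule card_mono) auto

lemma num_upto_pos:
  assumes "1 \<le> k" "1 \<le> n"
  shows "1 \<le> num_upto k n \<omega>"
proof -
  have "1 \<in> {i \<in> {1..n}. ind_type \<omega> i \<in> {1..k}}"
    using assms by simp
  moreover have "finite {i \<in> {1..n}. ind_type \<omega> i \<in> {1..k}}"
    by simp
  ultimately have "num_upto k n \<omega> \<noteq> 0"
    unfolding num_upto_def using card_0_eq by blast
  then show ?thesis
    by linarith
qed

lemma num_upto_self: "num_upto k k \<omega> = k"
proof -
  have "{i \<in> {1..k}. ind_type \<omega> i \<in> {1..k}} = {1..k}"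
    using ind_type_between[of _ \<omega>] by fastforce
  then show ?thesis
    by (simp add: num_upto_def)
qed

lemma num_type_self: "num_type k k \<omega> \<le> 1"
proof -
  have "{i \<in> {1..k}. ind_type \<omega> i = k} \<subseteq> {k}"
    using ind_type_between[of _ \<omega>] by fastforce
  then show ?thesis
    unfolding num_type_def using card_mono[of "{k}"] by fastforce
qed

lemma prefix_determined_card_types:
  "prefix_determined (n - 1) (\<lambda>\<omega>. card {i \<in> {1..n}. P (ind_type \<omega> i)})"
proof (rule prefix_determinedI)
  fix \<omega> \<omega>' :: "nat \<Rightarrow> nat \<times> bool"
  assume "\<And>i. i < n - 1 \<Longrightarrow> \<omega> i = \<omega>' i"
  then have "ind_type \<omega> i = ind_type \<omega>' i" if "i \<in> {1..n}" for i
    using that by (intro prefix_determinedD[OF prefix_determined_ind_type[of i n]]) auto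
  then have "{i \<in> {1..n}. P (ind_type \<omega> i)} = {i \<in> {1..n}. P (ind_type \<omega>' i)}"
    by auto
  then show "card {i \<in> {1..n}. P (ind_type \<omega> i)} = card {i \<in> {1..n}. P (ind_type \<omega>' i)}"
    by simp
qed

lemma prefix_determined_num_upto: "prefix_determined (n - 1) (num_upto k n)"
  unfolding num_upto_def by (rule prefix_determined_card_types)

lemma prefix_determined_num_type: "prefix_determined (n - 1) (num_type k n)"
  unfolding num_type_def by (rule prefix_determined_card_types)

lemma sum_indicator_shift:
  fixes t :: "'a \<Rightarrow> 'b" and \<phi> :: "nat \<Rightarrow> nat \<Rightarrow> real"
  assumes "finite S" "k \<in> K"
  shows "(\<Sum>x\<in>S. \<phi> (a + (if t x = k then 1 else 0)) (c + (if t x \<in> K then 1 else 0)))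
    = real (card {x\<in>S. t x = k}) * \<phi> (a + 1) (c + 1)
      + (real (card {x\<in>S. t x \<in> K}) - real (card {x\<in>S. t x = k})) * \<phi> a (c + 1)
      + (real (card S) - real (card {x\<in>S. t x \<in> K})) * \<phi> a c"
proof -
  let ?A = "{x\<in>S. t x = k}" and ?C = "{x\<in>S. t x \<in> K}"
  let ?B = "{x\<in>S. t x \<in> K \<and> t x \<noteq> k}" and ?D = "{x\<in>S. t x \<notin> K}"
  have card_C: "card ?C = card ?A + card ?B"
    using assms by (subst card_Un_disjoint[symmetric]) (auto intro: arg_cong[where f = card])
  have card_S: "card S = card ?C + card ?D"
    using assms by (subst card_Un_disjoint[symmetric]) (auto intro: arg_cong[where f = card])
  have "(\<Sum>x\<in>S. \<phi> (a + (if t x = k then 1 else 0)) (c + (if t x \<in> K then 1 else 0)))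
     = (\<Sum>x\<in>S. (if t x = k then \<phi> (a + 1) (c + 1) else 0)
         + (if t x \<in> K \<and> t x \<noteq> k then \<phi> a (c + 1) else 0) + (if t x \<notin> K then \<phi> a c else 0))"
    using assms by (intro sum.cong) auto
  also have "\<dots> = real (card ?A) * \<phi> (a + 1) (c + 1) + real (card ?B) * \<phi> a (c + 1)
      + real (card ?D) * \<phi> a c"
    using assms(1) by (simp add: sum.distrib flip: sum.inter_filter)
  finally show ?thesis
    using card_C card_S by simp
qed

text \<open>The conditional mean of \<open>\<phi> (num_type k (n + 1)) (num_upto k (n + 1))\<close> given
  \<open>num_type k n = a\<close> and \<open>num_upto k n = c\<close>: with probability \<open>r\<close> the newborn gets the fresh
  type \<open>n + 1 > k\<close>, otherwise it copies the type of a uniformly chosen parent.\<close>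
definition step_mean :: "real \<Rightarrow> nat \<Rightarrow> (nat \<Rightarrow> nat \<Rightarrow> real) \<Rightarrow> nat \<Rightarrow> nat \<Rightarrow> real" where
  "step_mean r n \<phi> a c = r * \<phi> a c + (1 - r) / real n *
     (real a * \<phi> (a + 1) (c + 1) + (real c - real a) * \<phi> a (c + 1) + (real n - real c) * \<phi> a c)"

definition newborn_type :: "(nat \<Rightarrow> nat \<times> bool) \<Rightarrow> nat \<Rightarrow> nat \<times> bool \<Rightarrow> nat" where
  "newborn_type \<omega> n x =
     (if snd x then n + 1 else if 1 \<le> fst x \<and> fst x \<le> n then ind_type \<omega> (fst x) else 1)"

lemma ind_type_Suc_newborn_type: "1 \<le> n \<Longrightarrow> ind_type \<omega> (Suc n) = newborn_type \<omega> n (\<omega> (n - 1))"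
  by (simp add: ind_type_Suc newborn_type_def Let_def)

lemma prefix_determined_newborn_type: "prefix_determined (n - 1) (\<lambda>\<omega>. newborn_type \<omega> n x)"
proof (cases "\<not> snd x \<and> 1 \<le> fst x \<and> fst x \<le> n")
  case True
  then show ?thesis
    using prefix_determined_ind_type[of "fst x" n] by (simp add: newborn_type_def)
next
  case False
  then have "newborn_type \<omega> n x = (if snd x then n + 1 else 1)" for \<omega>
    by (auto simp: newborn_type_def)
  then show ?thesis
    by (simp add: prefix_determined_def)
qed

lemma integral_newborn:
  assumes "1 \<le> k" "k \<le> n" "0 \<le> r" "r \<le> 1"
  shows "(\<integral>x. \<phi> (num_type k n \<omega> + (if newborn_type \<omega> n x = k then 1 else 0))
              (num_upto k n \<omega> + (if newborn_type \<omega> n x \<in> {1..k} then 1 else 0))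
           \<partial>measure_pmf (pair_pmf (pmf_of_set {1..n}) (bernoulli_pmf r)))
       = step_mean r n \<phi> (num_type k n \<omega>) (num_upto k n \<omega>)"
proof -
  let ?a = "num_type k n \<omega>" and ?c = "num_upto k n \<omega>"
  let ?F = "\<lambda>x. \<phi> (?a + (if newborn_type \<omega> n x = k then 1 else 0))
                  (?c + (if newborn_type \<omega> n x \<in> {1..k} then 1 else 0))"
  have n: "1 \<le> n"
    using assms by simp
  have "(\<integral>x. ?F x \<partial>measure_pmf (pair_pmf (pmf_of_set {1..n}) (bernoulli_pmf r)))
      = (\<Sum>x\<in>{1..n} \<times> UNIV. ?F x * pmf (pair_pmf (pmf_of_set {1..n}) (bernoulli_pmf r)) x)"
    using n by (intro integral_measure_pmf_real) (auto simp: set_pair_pmf)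
  also have "\<dots> = (\<Sum>p\<in>{1..n}. \<Sum>b\<in>UNIV. ?F (p, b) * pmf (pair_pmf (pmf_of_set {1..n}) (bernoulli_pmf r)) (p, b))"
    by (subst sum.cartesian_product) (simp add: case_prod_beta)
  also have "\<dots> = (\<Sum>p\<in>{1..n}. \<phi> ?a ?c * (r / n) + ?F (p, False) * ((1 - r) / n))"
    using n assms by (intro sum.cong refl) (simp add: UNIV_bool pmf_pair newborn_type_def)
  also have "\<dots> = r * \<phi> ?a ?c + (1 - r) / n * (\<Sum>p\<in>{1..n}. ?F (p, False))"
    using n by (simp add: sum.distrib sum_distrib_left mult.commute)
  also have "(\<Sum>p\<in>{1..n}. ?F (p, False))
      = real ?a * \<phi> (?a + 1) (?c + 1) + (real ?c - real ?a) * \<phi> ?a (?c + 1) + (real n - real ?c) * \<phi> ?a ?c"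
    using sum_indicator_shift[of "{1..n}" k "{1..k}" \<phi> ?a "ind_type \<omega>" ?c] assms
    by (simp add: newborn_type_def num_type_def num_upto_def)
  finally show ?thesis
    by (simp add: step_mean_def)
qed

lemma prob_space_yule_space: "prob_space (yule_space r)"
  unfolding yule_space_def by (intro prob_space_PiM prob_space_measure_pmf)

lemma space_yule_space [simp]: "space (yule_space r) = UNIV"
  by (simp add: yule_space_def space_PiM)

lemma borel_measurable_yule_space:
  fixes g :: "(nat \<Rightarrow> nat \<times> bool) \<Rightarrow> real"
  assumes "prefix_determined m g"
  shows "g \<in> borel_measurable (yule_space r)"
  unfolding yule_space_def using assms by (rule borel_measurable_prefix_determined) auto

lemma integrable_yule_space:
  fixes g :: "(nat \<Rightarrow> nat \<times> bool) \<Rightarrow> real"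
  assumes "prefix_determined m g" "\<And>\<omega>. \<bar>g \<omega>\<bar> \<le> B"
  shows "integrable (yule_space r) g"
  unfolding yule_space_def using assms by (rule integrable_prefix_determined)

lemma abs_le_double_sum:
  fixes \<phi> :: "nat \<Rightarrow> nat \<Rightarrow> real"
  assumes "a \<le> m" "c \<le> m"
  shows "\<bar>\<phi> a c\<bar> \<le> (\<Sum>a\<le>m. \<Sum>c\<le>m. \<bar>\<phi> a c\<bar>)"
proof -
  have "\<bar>\<phi> a c\<bar> \<le> (\<Sum>c\<le>m. \<bar>\<phi> a c\<bar>)"
    using assms by (intro member_le_sum) auto
  also have "\<dots> \<le> (\<Sum>a\<le>m. \<Sum>c\<le>m. \<bar>\<phi> a c\<bar>)"
    using assms by (intro member_le_sum[where f = "\<lambda>a. \<Sum>c\<le>m. \<bar>\<phi> a c\<bar>"]) (auto intro: sum_nonneg)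
  finally show ?thesis .
qed

lemma integral_step_mean:
  fixes g :: "(nat \<Rightarrow> nat \<times> bool) \<Rightarrow> real" and \<phi> :: "nat \<Rightarrow> nat \<Rightarrow> real"
  assumes k: "1 \<le> k" "k \<le> n" and r: "0 \<le> r" "r \<le> 1"
    and g: "prefix_determined (n - 1) g" "\<And>\<omega>. \<bar>g \<omega>\<bar> \<le> B"
  shows "(\<integral>\<omega>. g \<omega> * \<phi> (num_type k (Suc n) \<omega>) (num_upto k (Suc n) \<omega>) \<partial>yule_space r)
       = (\<integral>\<omega>. g \<omega> * step_mean r n \<phi> (num_type k n \<omega>) (num_upto k n \<omega>) \<partial>yule_space r)"
proof -
  define F where "F \<omega> x = g \<omega> * \<phi> (num_type k n \<omega> + (if newborn_type \<omega> n x = k then 1 else 0))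
      (num_upto k n \<omega> + (if newborn_type \<omega> n x \<in> {1..k} then 1 else 0))" for \<omega> x
  define M where "M = (\<Sum>a\<le>Suc n. \<Sum>c\<le>Suc n. \<bar>\<phi> a c\<bar>)"
  have n: "1 \<le> n"
    using k by simp
  have F_bound: "\<bar>F \<omega> x\<bar> \<le> B * M" for \<omega> x
  proof -
    have "num_type k n \<omega> \<le> n" "num_upto k n \<omega> \<le> n"
      using num_type_le_num_upto[OF k(1)] num_upto_le le_trans by blast+
    then have "\<bar>\<phi> (num_type k n \<omega> + (if newborn_type \<omega> n x = k then 1 else 0))
        (num_upto k n \<omega> + (if newborn_type \<omega> n x \<in> {1..k} then 1 else 0))\<bar> \<le> M"
      unfolding M_def by (intro abs_le_double_sum) auto
    moreover have "0 \<le> B"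
      using g(2) by (meson abs_ge_zero order_trans)
    ultimately show ?thesis
      unfolding F_def abs_mult by (intro mult_mono g(2)) auto
  qed
  have F_det: "prefix_determined (n - 1) (\<lambda>\<omega>. F \<omega> x)" for x
  proof (rule prefix_determinedI)
    fix \<omega> \<omega>' :: "nat \<Rightarrow> nat \<times> bool"
    assume agree: "\<And>i. i < n - 1 \<Longrightarrow> \<omega> i = \<omega>' i"
    show "F \<omega> x = F \<omega>' x"
      unfolding F_def
      using prefix_determinedD[OF g(1) agree] prefix_determinedD[OF prefix_determined_num_type agree]
        prefix_determinedD[OF prefix_determined_num_upto agree]
        prefix_determinedD[OF prefix_determined_newborn_type agree]
      by simp
  qed
  have "(\<integral>\<omega>. g \<omega> * \<phi> (num_type k (Suc n) \<omega>) (num_upto k (Suc n) \<omega>) \<partial>yule_space r)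
      = (\<integral>\<omega>. F \<omega> (\<omega> (n - 1)) \<partial>yule_space r)"
    unfolding F_def num_type_Suc num_upto_Suc ind_type_Suc_newborn_type[OF n] ..
  also have "\<dots> = (\<integral>\<omega>. (\<integral>x. F \<omega> x \<partial>measure_pmf (pair_pmf (pmf_of_set {1..Suc (n - 1)}) (bernoulli_pmf r)))
      \<partial>yule_space r)"
    unfolding yule_space_def by (rule integral_fresh_coordinate[OF F_det F_bound])
  also have "\<dots> = (\<integral>\<omega>. g \<omega> * step_mean r n \<phi> (num_type k n \<omega>) (num_upto k n \<omega>) \<partial>yule_space r)"
    using n integral_newborn[OF k r] by (simp add: F_def)
  finally show ?thesis .
qed

section \<open>The martingales Vfrac and Qfrac\<close>

text \<open>The second moment of the limiting colour fraction of a Polya urn holding \<open>a\<close> balls of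
  one colour among \<open>c\<close>; like \<open>a / c\<close>, it is a martingale along the urn.\<close>
definition polya_moment2 :: "nat \<Rightarrow> nat \<Rightarrow> real" where
  "polya_moment2 a c = real a * (real a + 1) / (real c * (real c + 1))"

definition Qfrac :: "nat \<Rightarrow> nat \<Rightarrow> (nat \<Rightarrow> nat \<times> bool) \<Rightarrow> real" where
  "Qfrac k n \<omega> = polya_moment2 (num_type k n \<omega>) (num_upto k n \<omega>)"

lemma step_mean_ratio:
  assumes "0 < c" "0 < n"
  shows "step_mean r n (\<lambda>a c. real a / real c) a c = real a / real c"
proof -
  let ?a = "real a" and ?c = "real c"
  have "?a * ((?a + 1) / (?c + 1)) + (?c - ?a) * (?a / (?c + 1)) = (?a * (?a + 1) + (?c - ?a) * ?a) / (?c + 1)"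
    by (simp only: times_divide_eq_right) (rule add_divide_distrib[symmetric])
  also have "?a * (?a + 1) + (?c - ?a) * ?a = ?a * (?c + 1)"
    by (simp add: algebra_simps)
  finally have "?a * ((?a + 1) / (?c + 1)) + (?c - ?a) * (?a / (?c + 1)) = ?a"
    by simp
  then show ?thesis
    using assms by (simp add: step_mean_def field_simps)
qed

lemma step_mean_polya_moment2:
  assumes "0 < c" "0 < n"
  shows "step_mean r n (\<lambda>a c. polya_moment2 a c * f c) a c
     = polya_moment2 a c * (f c + (1 - r) * real c / real n * (f (Suc c) - f c))"
proof -
  let ?a = "real a" and ?c = "real c"
  let ?d = "(?c + 1) * (?c + 1 + 1)"
  have "?a * polya_moment2 (a + 1) (c + 1) + (?c - ?a) * polya_moment2 a (c + 1)
      = (?a * ((?a + 1) * (?a + 1 + 1)) + (?c - ?a) * (?a * (?a + 1))) / ?d"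
    unfolding polya_moment2_def of_nat_add of_nat_1
    by (simp only: times_divide_eq_right) (rule add_divide_distrib[symmetric])
  also have "?a * ((?a + 1) * (?a + 1 + 1)) + (?c - ?a) * (?a * (?a + 1)) = ?a * (?a + 1) * (?c + 1 + 1)"
    by (simp add: algebra_simps)
  also have "?a * (?a + 1) * (?c + 1 + 1) / ?d = ?c * polya_moment2 a c"
    using assms by (simp add: polya_moment2_def)
  finally have urn: "?a * polya_moment2 (a + 1) (c + 1) + (?c - ?a) * polya_moment2 a (c + 1)
      = ?c * polya_moment2 a c" .
  have "step_mean r n (\<lambda>a c. polya_moment2 a c * f c) a c
      = r * (polya_moment2 a c * f c) + (1 - r) / real n *
        ((?a * polya_moment2 (a + 1) (c + 1) + (?c - ?a) * polya_moment2 a (c + 1)) * f (c + 1)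
         + (real n - ?c) * (polya_moment2 a c * f c))"
    unfolding step_mean_def by (simp add: algebra_simps)
  also have "\<dots> = polya_moment2 a c * (f c + (1 - r) * ?c / real n * (f (Suc c) - f c))"
    unfolding urn using assms by (simp add: field_simps)
  finally show ?thesis .
qed

lemma Vfrac_bounds: "1 \<le> k \<Longrightarrow> 0 \<le> Vfrac k n \<omega> \<and> Vfrac k n \<omega> \<le> 1"
  unfolding Vfrac_eq using num_type_le_num_upto[of k n \<omega>] by (auto simp: divide_le_eq_1)

lemma polya_moment2_bounds: "a \<le> c \<Longrightarrow> 0 \<le> polya_moment2 a c \<and> polya_moment2 a c \<le> 1"
  unfolding polya_moment2_def by (auto simp: divide_le_eq_1 intro: mult_mono)

lemma Qfrac_bounds: "1 \<le> k \<Longrightarrow> 0 \<le> Qfrac k n \<omega> \<and> Qfrac k n \<omega> \<le> 1"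
  unfolding Qfrac_def by (intro polya_moment2_bounds num_type_le_num_upto)

lemma Vfrac_sq_le_Qfrac:
  assumes "1 \<le> k" "1 \<le> n"
  shows "(Vfrac k n \<omega>)\<^sup>2 \<le> Qfrac k n \<omega>"
proof -
  define a where "a = real (num_type k n \<omega>)"
  define c where "c = real (num_upto k n \<omega>)"
  have ac: "0 \<le> a" "a \<le> c" "1 \<le> c"
    using num_type_le_num_upto[OF assms(1)] num_upto_pos[OF assms] by (auto simp: a_def c_def)
  then have "a / c \<le> (a + 1) / (c + 1)"
    by (simp add: divide_simps algebra_simps)
  then have "a / c * (a / c) \<le> a / c * ((a + 1) / (c + 1))"
    using ac by (intro mult_left_mono) auto
  then show ?thesis
    by (simp add: Vfrac_eq Qfrac_def polya_moment2_def a_def c_def power2_eq_square)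
qed

lemma Qfrac_self_le: "1 \<le> k \<Longrightarrow> Qfrac k k \<omega> \<le> 2 / (real k)\<^sup>2"
proof -
  assume k: "1 \<le> k"
  have "real (num_type k k \<omega>) * (real (num_type k k \<omega>) + 1) \<le> 1 * 2"
    using num_type_self[of k \<omega>] by (intro mult_mono) auto
  moreover have "real k * real k \<le> real k * (real k + 1)"
    by (intro mult_left_mono) auto
  ultimately show ?thesis
    using k unfolding Qfrac_def polya_moment2_def num_upto_self power2_eq_square
    by (intro frac_le) auto
qed

lemma prefix_determined_Vfrac: "prefix_determined (n - 1) (Vfrac k n)"
  unfolding Vfrac_eq[abs_def]
  by (rule prefix_determined_comp2[OF prefix_determined_num_type prefix_determined_num_upto])

lemma prefix_determined_Qfrac: "prefix_determined (n - 1) (Qfrac k n)"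
  unfolding Qfrac_def[abs_def]
  by (rule prefix_determined_comp2[OF prefix_determined_num_type prefix_determined_num_upto])

lemma integral_Vfrac_Suc:
  assumes "1 \<le> k" "k \<le> n" "0 \<le> r" "r \<le> 1" "prefix_determined (n - 1) g" "\<And>\<omega>. \<bar>g \<omega>\<bar> \<le> B"
  shows "(\<integral>\<omega>. g \<omega> * Vfrac k (Suc n) \<omega> \<partial>yule_space r) = (\<integral>\<omega>. g \<omega> * Vfrac k n \<omega> \<partial>yule_space r)"
proof -
  have "step_mean r n (\<lambda>a c. real a / real c) (num_type k n \<omega>) (num_upto k n \<omega>) = Vfrac k n \<omega>" for \<omega>
    unfolding Vfrac_eq using num_upto_pos[of k n \<omega>] assms(1,2) by (intro step_mean_ratio) auto
  then show ?thesis
    using integral_step_mean[OF assms, of "\<lambda>a c. real a / real c"] by (simp add: Vfrac_eq)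
qed

lemma integral_Qfrac_Suc:
  assumes "1 \<le> k" "k \<le> n" "0 \<le> r" "r \<le> 1" "prefix_determined (n - 1) g" "\<And>\<omega>. \<bar>g \<omega>\<bar> \<le> B"
  shows "(\<integral>\<omega>. g \<omega> * (Qfrac k (Suc n) \<omega> * f (num_upto k (Suc n) \<omega>)) \<partial>yule_space r)
    = (\<integral>\<omega>. g \<omega> * (Qfrac k n \<omega> * (f (num_upto k n \<omega>) + (1 - r) * real (num_upto k n \<omega>) / real n
          * (f (Suc (num_upto k n \<omega>)) - f (num_upto k n \<omega>)))) \<partial>yule_space r)"
proof -
  have "step_mean r n (\<lambda>a c. polya_moment2 a c * f c) (num_type k n \<omega>) (num_upto k n \<omega>)
      = Qfrac k n \<omega> * (f (num_upto k n \<omega>) + (1 - r) * real (num_upto k n \<omega>) / real n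
          * (f (Suc (num_upto k n \<omega>)) - f (num_upto k n \<omega>)))" for \<omega>
    unfolding Qfrac_def using num_upto_pos[of k n \<omega>] assms(1,2) by (intro step_mean_polya_moment2) auto
  then show ?thesis
    using integral_step_mean[OF assms, of "\<lambda>a c. polya_moment2 a c * f c"] by (simp add: Qfrac_def)
qed

lemma integral_Qfrac_eq:
  assumes "1 \<le> k" "k \<le> n" "n \<le> m" "0 \<le> r" "r \<le> 1" "prefix_determined (n - 1) g" "\<And>\<omega>. \<bar>g \<omega>\<bar> \<le> B"
  shows "(\<integral>\<omega>. g \<omega> * Qfrac k m \<omega> \<partial>yule_space r) = (\<integral>\<omega>. g \<omega> * Qfrac k n \<omega> \<partial>yule_space r)"
  using assms(3)
proof (induction m rule: dec_induct)
  case (step m)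
  have "(\<integral>\<omega>. g \<omega> * (Qfrac k (Suc m) \<omega> * 1) \<partial>yule_space r)
      = (\<integral>\<omega>. g \<omega> * (Qfrac k m \<omega> * (1 + (1 - r) * real (num_upto k m \<omega>) / real m * (1 - 1))) \<partial>yule_space r)"
    using step.hyps assms(2)
    by (intro integral_Qfrac_Suc[OF assms(1) _ assms(4,5) prefix_determined_mono[OF assms(6)] assms(7)]) auto
  then show ?case
    using step.IH by simp
qed simp

lemma Vfrac_tendsto_Wlim:
  assumes k: "1 \<le> k" and r: "0 \<le> r" "r \<le> 1"
  shows "AE \<omega> in yule_space r. (\<lambda>n. Vfrac k n \<omega>) \<longlonglongrightarrow> Wlim k \<omega>"
proof -
  interpret V: prefix_martingale "\<lambda>j. pair_pmf (pmf_of_set {1..Suc j}) (bernoulli_pmf r)"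
    "\<lambda>i. k + i - 1" "\<lambda>i. Vfrac k (k + i)"
  proof (unfold_locales, goal_cases)
    case 1
    show ?case
      by (auto simp: mono_def)
  next
    case (2 i)
    show ?case
      by (rule prefix_determined_Vfrac)
  next
    case (3 i \<omega>)
    show ?case
      using Vfrac_bounds[OF k] by simp
  next
    case (4 i \<omega>)
    show ?case
      using Vfrac_bounds[OF k] by simp
  next
    case (5 i g B)
    then show ?case
      using integral_Vfrac_Suc[of k "k + i" r g B] k r by (simp add: yule_space_def)
  qed
  show ?thesis
    using V.AE_convergent unfolding yule_space_def[symmetric]
  proof (rule AE_mp, intro AE_I2 impI)
    fix \<omega>
    assume "convergent (\<lambda>i. Vfrac k (k + i) \<omega>)"
    then have "convergent (\<lambda>n. Vfrac k n \<omega>)"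
      using convergent_ignore_initial_segment[of "\<lambda>n. Vfrac k n \<omega>" k] by (simp add: add.commute)
    then show "(\<lambda>n. Vfrac k n \<omega>) \<longlonglongrightarrow> Wlim k \<omega>"
      by (simp add: Wlim_def convergent_LIMSEQ_iff)
  qed
qed

lemma borel_measurable_Wlim: "Wlim k \<in> borel_measurable (yule_space r)"
  unfolding Wlim_def[abs_def]
  by (intro borel_measurable_lim_metric borel_measurable_yule_space[OF prefix_determined_Vfrac])

lemma AE_Wlim_bounds:
  assumes "1 \<le> k" "0 \<le> r" "r \<le> 1"
  shows "AE \<omega> in yule_space r. 0 \<le> Wlim k \<omega> \<and> Wlim k \<omega> \<le> 1"
  using Vfrac_tendsto_Wlim[OF assms]
proof (rule AE_mp, intro AE_I2 impI)
  fix \<omega>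
  assume lim: "(\<lambda>n. Vfrac k n \<omega>) \<longlonglongrightarrow> Wlim k \<omega>"
  show "0 \<le> Wlim k \<omega> \<and> Wlim k \<omega> \<le> 1"
    using Vfrac_bounds[OF assms(1)]
    by (intro conjI LIMSEQ_le_const[OF lim] LIMSEQ_le_const2[OF lim]) auto
qed

text \<open>\<open>W\<^sup>2\<close> is the limit of \<open>Vfrac\<^sup>2 \<le> Qfrac\<close>, and \<open>Qfrac\<close> is a martingale.\<close>
lemma integral_Wlim_sq_le:
  assumes k: "1 \<le> k" "k \<le> N" and r: "0 \<le> r" "r \<le> 1"
    and Y: "prefix_determined (N - 1) Y" "\<And>\<omega>. \<bar>Y \<omega>\<bar> \<le> 1"
  shows "(\<integral>\<omega>. (Wlim k \<omega>)\<^sup>2 * (Y \<omega>)\<^sup>2 \<partial>yule_space r) \<le> (\<integral>\<omega>. (Y \<omega>)\<^sup>2 * Qfrac k N \<omega> \<partial>yule_space r)"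
proof -
  interpret prob_space "yule_space r"
    by (rule prob_space_yule_space)
  have Y_sq: "(Y \<omega>)\<^sup>2 \<le> 1" for \<omega>
    using Y(2) by (simp add: abs_square_le_1)
  have V_sq: "(Vfrac k n \<omega>)\<^sup>2 \<le> 1" for n \<omega>
    using Vfrac_bounds[OF k(1)] by (simp add: abs_square_le_1)
  have "(\<lambda>n. \<integral>\<omega>. (Vfrac k n \<omega>)\<^sup>2 * (Y \<omega>)\<^sup>2 \<partial>yule_space r)
      \<longlonglongrightarrow> (\<integral>\<omega>. (Wlim k \<omega>)\<^sup>2 * (Y \<omega>)\<^sup>2 \<partial>yule_space r)"
  proof (rule integral_dominated_convergence[where w = "\<lambda>_. 1"])
    show "AE \<omega> in yule_space r. (\<lambda>n. (Vfrac k n \<omega>)\<^sup>2 * (Y \<omega>)\<^sup>2) \<longlonglongrightarrow> (Wlim k \<omega>)\<^sup>2 * (Y \<omega>)\<^sup>2"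
      using Vfrac_tendsto_Wlim[OF k(1) r] by eventually_elim (intro tendsto_intros)
    show "AE \<omega> in yule_space r. norm ((Vfrac k n \<omega>)\<^sup>2 * (Y \<omega>)\<^sup>2) \<le> 1" for n
      using Y_sq V_sq by (simp add: mult_le_one)
    show "(\<lambda>\<omega>. (Vfrac k n \<omega>)\<^sup>2 * (Y \<omega>)\<^sup>2) \<in> borel_measurable (yule_space r)" for n
      using borel_measurable_yule_space[OF prefix_determined_Vfrac] borel_measurable_yule_space[OF Y(1)]
      by measurable
    show "(\<lambda>\<omega>. (Wlim k \<omega>)\<^sup>2 * (Y \<omega>)\<^sup>2) \<in> borel_measurable (yule_space r)"
      using borel_measurable_Wlim borel_measurable_yule_space[OF Y(1)] by measurable
  qed simp
  moreover have "(\<integral>\<omega>. (Vfrac k n \<omega>)\<^sup>2 * (Y \<omega>)\<^sup>2 \<partial>yule_space r) \<le> (\<integral>\<omega>. (Y \<omega>)\<^sup>2 * Qfrac k N \<omega> \<partial>yule_space r)"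
    if "N \<le> n" for n
  proof -
    have Y_n: "prefix_determined (n - 1) Y"
      using prefix_determined_mono[OF Y(1)] that by simp
    have "(\<integral>\<omega>. (Vfrac k n \<omega>)\<^sup>2 * (Y \<omega>)\<^sup>2 \<partial>yule_space r) \<le> (\<integral>\<omega>. (Y \<omega>)\<^sup>2 * Qfrac k n \<omega> \<partial>yule_space r)"
    proof (rule integral_mono)
      show "integrable (yule_space r) (\<lambda>\<omega>. (Vfrac k n \<omega>)\<^sup>2 * (Y \<omega>)\<^sup>2)"
        using Y_sq V_sq
        by (intro integrable_yule_space[where B = 1, OF prefix_determined_comp2[OF prefix_determined_Vfrac Y_n]])
           (simp add: mult_le_one)
      show "integrable (yule_space r) (\<lambda>\<omega>. (Y \<omega>)\<^sup>2 * Qfrac k n \<omega>)"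
        using Y_sq Qfrac_bounds[OF k(1)]
        by (intro integrable_yule_space[where B = 1, OF prefix_determined_comp2[OF Y_n prefix_determined_Qfrac]])
           (simp add: mult_le_one)
      show "(Vfrac k n \<omega>)\<^sup>2 * (Y \<omega>)\<^sup>2 \<le> (Y \<omega>)\<^sup>2 * Qfrac k n \<omega>" for \<omega>
        using Vfrac_sq_le_Qfrac[OF k(1), of n \<omega>] that k
        by (subst mult.commute) (intro mult_left_mono; simp)
    qed
    also have "\<dots> = (\<integral>\<omega>. (Y \<omega>)\<^sup>2 * Qfrac k N \<omega> \<partial>yule_space r)"
      using Y_sq by (intro integral_Qfrac_eq[OF k that r prefix_determined_comp[OF Y(1)]]) simp
    finally show ?thesis .
  qed
  ultimately show ?thesis
    by (intro LIMSEQ_le_const2[where X = "\<lambda>n. \<integral>\<omega>. (Vfrac k n \<omega>)\<^sup>2 * (Y \<omega>)\<^sup>2 \<partial>yule_space r"]) auto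
qed

lemma prob_Wlim_mult_gt_le:
  assumes k: "1 \<le> k" "k \<le> N" and r: "0 \<le> r" "r \<le> 1" and "0 < \<epsilon>"
    and Y: "prefix_determined (N - 1) Y" "\<And>\<omega>. \<bar>Y \<omega>\<bar> \<le> 1"
  shows "measure (yule_space r) {\<omega> \<in> space (yule_space r). \<bar>Wlim k \<omega> * Y \<omega>\<bar> > \<epsilon>}
     \<le> (\<integral>\<omega>. (Y \<omega>)\<^sup>2 * Qfrac k N \<omega> \<partial>yule_space r) / \<epsilon>\<^sup>2"
proof -
  interpret prob_space "yule_space r"
    by (rule prob_space_yule_space)
  let ?f = "\<lambda>\<omega>. (Wlim k \<omega>)\<^sup>2 * (Y \<omega>)\<^sup>2"
  have f_meas: "?f \<in> borel_measurable (yule_space r)"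
    using borel_measurable_Wlim borel_measurable_yule_space[OF Y(1)] by measurable
  have "integrable (yule_space r) ?f"
  proof (rule integrable_const_bound[where B = 1])
    show "AE \<omega> in yule_space r. norm (?f \<omega>) \<le> 1"
      using AE_Wlim_bounds[OF k(1) r]
    proof eventually_elim
      case (elim \<omega>)
      then have "(Wlim k \<omega>)\<^sup>2 \<le> 1" "(Y \<omega>)\<^sup>2 \<le> 1"
        using Y(2)[of \<omega>] by (auto simp: abs_square_le_1)
      then show ?case
        by (simp add: mult_le_one)
    qed
  qed (rule f_meas)
  then have "measure (yule_space r) {\<omega> \<in> space (yule_space r). \<epsilon>\<^sup>2 \<le> ?f \<omega>} \<le> (\<integral>\<omega>. ?f \<omega> \<partial>yule_space r) / \<epsilon>\<^sup>2"
    using \<open>0 < \<epsilon>\<close> sets.top[of "yule_space r"]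
    by (intro integral_Markov_inequality_measure[where A = "space (yule_space r)"]) auto
  moreover have "measure (yule_space r) {\<omega> \<in> space (yule_space r). \<bar>Wlim k \<omega> * Y \<omega>\<bar> > \<epsilon>}
      \<le> measure (yule_space r) {\<omega> \<in> space (yule_space r). \<epsilon>\<^sup>2 \<le> ?f \<omega>}"
  proof (rule finite_measure_mono)
    show "{\<omega> \<in> space (yule_space r). \<epsilon>\<^sup>2 \<le> ?f \<omega>} \<in> sets (yule_space r)"
      using f_meas by (intro borel_measurable_le) auto
    show "{\<omega> \<in> space (yule_space r). \<bar>Wlim k \<omega> * Y \<omega>\<bar> > \<epsilon>} \<subseteq> {\<omega> \<in> space (yule_space r). \<epsilon>\<^sup>2 \<le> ?f \<omega>}"
    proof safe
      fix \<omega>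
      assume "\<epsilon> < \<bar>Wlim k \<omega> * Y \<omega>\<bar>"
      then have "\<epsilon>\<^sup>2 \<le> \<bar>Wlim k \<omega> * Y \<omega>\<bar>\<^sup>2"
        using \<open>0 < \<epsilon>\<close> by (intro power_mono) auto
      then show "\<epsilon>\<^sup>2 \<le> ?f \<omega>"
        by (simp add: power_mult_distrib)
    qed
  qed
  moreover have "(\<integral>\<omega>. ?f \<omega> \<partial>yule_space r) / \<epsilon>\<^sup>2 \<le> (\<integral>\<omega>. (Y \<omega>)\<^sup>2 * Qfrac k N \<omega> \<partial>yule_space r) / \<epsilon>\<^sup>2"
    by (intro divide_right_mono integral_Wlim_sq_le[OF k r Y]) simp
  ultimately show ?thesis
    by linarith
qed

section \<open>Q-weighted moments of num_upto\<close>

lemma integrable_Qfrac_mult: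
  assumes "1 \<le> k"
  shows "integrable (yule_space r) (\<lambda>\<omega>. Qfrac k n \<omega> * f (num_upto k n \<omega>))"
proof (rule integrable_yule_space)
  show "prefix_determined (n - 1) (\<lambda>\<omega>. Qfrac k n \<omega> * f (num_upto k n \<omega>))"
    by (rule prefix_determined_comp2[OF prefix_determined_Qfrac prefix_determined_num_upto])
  show "\<bar>Qfrac k n \<omega> * f (num_upto k n \<omega>)\<bar> \<le> (\<Sum>c\<le>n. \<bar>f c\<bar>)" for \<omega>
  proof -
    have "\<bar>f (num_upto k n \<omega>)\<bar> \<le> (\<Sum>c\<le>n. \<bar>f c\<bar>)"
      using num_upto_le[of k n \<omega>] by (intro member_le_sum[where f = "\<lambda>c. \<bar>f c\<bar>"]) auto
    moreover have "\<bar>Qfrac k n \<omega>\<bar> \<le> 1"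
      using Qfrac_bounds[OF assms, of n \<omega>] by simp
    ultimately have "\<bar>Qfrac k n \<omega>\<bar> * \<bar>f (num_upto k n \<omega>)\<bar> \<le> 1 * (\<Sum>c\<le>n. \<bar>f c\<bar>)"
      by (intro mult_mono) (auto intro: sum_nonneg)
    then show ?thesis
      by (simp add: abs_mult)
  qed
qed

definition Qmoment :: "real \<Rightarrow> nat \<Rightarrow> nat \<Rightarrow> nat \<Rightarrow> real" where
  "Qmoment r j k n = (\<integral>\<omega>. Qfrac k n \<omega> * (real (num_upto k n \<omega>)) ^ j \<partial>yule_space r)"

lemma Qmoment_Suc:
  assumes k: "1 \<le> k" "k \<le> n" and r: "0 \<le> r" "r \<le> 1"
  shows "Qmoment r 0 k (Suc n) = Qmoment r 0 k n"
    and "Qmoment r 1 k (Suc n) = (1 + (1 - r) / real n) * Qmoment r 1 k n"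
    and "Qmoment r 2 k (Suc n) = (1 + 2 * (1 - r) / real n) * Qmoment r 2 k n + (1 - r) / real n * Qmoment r 1 k n"
proof -
  have n: "0 < real n" using k by simp
  have st: "(\<integral>\<omega>. 1 * (Qfrac k (Suc n) \<omega> * f (num_upto k (Suc n) \<omega>)) \<partial>yule_space r)
    = (\<integral>\<omega>. 1 * (Qfrac k n \<omega> * (f (num_upto k n \<omega>) + (1 - r) * real (num_upto k n \<omega>) / real n
          * (f (Suc (num_upto k n \<omega>)) - f (num_upto k n \<omega>)))) \<partial>yule_space r)" for f
    by (rule integral_Qfrac_Suc[where B=1, OF k r prefix_determined_const]) simp
  show "Qmoment r 0 k (Suc n) = Qmoment r 0 k n"
    using st[of "\<lambda>_. 1"] by (simp add: Qmoment_def)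
  show "Qmoment r 1 k (Suc n) = (1 + (1 - r) / real n) * Qmoment r 1 k n"
  proof -
    have "Qmoment r 1 k (Suc n) = (\<integral>\<omega>. 1 * (Qfrac k (Suc n) \<omega> * real (num_upto k (Suc n) \<omega>)) \<partial>yule_space r)"
      unfolding Qmoment_def by simp
    also have "\<dots> = (\<integral>\<omega>. 1 * (Qfrac k n \<omega> * (real (num_upto k n \<omega>) + (1 - r) * real (num_upto k n \<omega>) / real n
          * (real (Suc (num_upto k n \<omega>)) - real (num_upto k n \<omega>)))) \<partial>yule_space r)"
      by (rule st)
    also have "\<dots> = (\<integral>\<omega>. (1 + (1 - r) / real n) * (Qfrac k n \<omega> * real (num_upto k n \<omega>)) \<partial>yule_space r)"
      by (rule Bochner_Integration.integral_cong[OF refl]) (simp add: algebra_simps)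
    also have "\<dots> = (1 + (1 - r) / real n) * Qmoment r 1 k n" unfolding Qmoment_def by simp
    finally show ?thesis .
  qed
  show "Qmoment r 2 k (Suc n) = (1 + 2 * (1 - r) / real n) * Qmoment r 2 k n + (1 - r) / real n * Qmoment r 1 k n"
  proof -
    have "Qmoment r 2 k (Suc n) = (\<integral>\<omega>. 1 * (Qfrac k (Suc n) \<omega> * (real (num_upto k (Suc n) \<omega>))\<^sup>2) \<partial>yule_space r)"
      unfolding Qmoment_def by simp
    also have "\<dots> = (\<integral>\<omega>. 1 * (Qfrac k n \<omega> * ((real (num_upto k n \<omega>))\<^sup>2 + (1 - r) * real (num_upto k n \<omega>) / real n
          * ((real (Suc (num_upto k n \<omega>)))\<^sup>2 - (real (num_upto k n \<omega>))\<^sup>2))) \<partial>yule_space r)"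
      by (rule st)
    also have "\<dots> = (\<integral>\<omega>. (1 + 2 * (1 - r) / real n) * (Qfrac k n \<omega> * (real (num_upto k n \<omega>))\<^sup>2)
         + (1 - r) / real n * (Qfrac k n \<omega> * real (num_upto k n \<omega>)) \<partial>yule_space r)"
      by (rule Bochner_Integration.integral_cong[OF refl]) (use n in \<open>simp add: field_simps power2_eq_square\<close>)
    also have "\<dots> = (1 + 2 * (1 - r) / real n) * Qmoment r 2 k n + (1 - r) / real n * Qmoment r 1 k n"
      unfolding Qmoment_def
      using integrable_Qfrac_mult[OF k(1), of r n "\<lambda>c. (real c)\<^sup>2"] integrable_Qfrac_mult[OF k(1), of r n real]
      by simp
    finally show ?thesis .
  qed
qed

lemma Qmoment_0_eq:
  assumes "1 \<le> k" "k \<le> n" "0 \<le> r" "r \<le> 1"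
  shows "Qmoment r 0 k n = Qmoment r 0 k k"
  using assms(2)
proof (induction n rule: dec_induct)
  case (step n)
  then show ?case
    using Qmoment_Suc(1)[OF assms(1) step.hyps(1) assms(3,4)] by simp
qed simp

lemma Qmoment_1_eq:
  assumes "1 \<le> k" "k \<le> n" "0 \<le> r" "r \<le> 1"
  shows "Qmoment r 1 k n = Qmoment r 0 k k * real k * rising_prod (1 - r) k n"
  using assms(2)
proof (induction n rule: dec_induct)
  case base
  then show ?case
    by (simp add: Qmoment_def num_upto_self)
next
  case (step n)
  then show ?case
    using Qmoment_Suc(2)[OF assms(1) step.hyps(1) assms(3,4)] by (simp add: rising_prod_Suc)
qed

lemma Qmoment_2_le:
  assumes k: "1 \<le> k" "k \<le> n" and r: "0 \<le> r" "r \<le> 1"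
  shows "Qmoment r 2 k n \<le> Qmoment r 0 k k * ((real k)\<^sup>2 * (rising_prod (1 - r) k n)\<^sup>2 + var_sum (1 - r) k n)"
  using k(2)
proof (induction n rule: dec_induct)
  case base
  then show ?case
    by (simp add: Qmoment_def num_upto_self var_sum_def)
next
  case (step n)
  let ?e = "Qmoment r 0 k k" and ?P = "rising_prod (1 - r) k n" and ?W = "var_sum (1 - r) k n"
  let ?a = "1 + (1 - r) / real n"
  have n: "0 < real n"
    using step.hyps k by simp
  have e: "0 \<le> ?e"
    unfolding Qmoment_def using Qfrac_bounds[OF k(1)] by (simp add: Bochner_Integration.integral_nonneg)
  have "Qmoment r 2 k (Suc n) = (1 + 2 * (1 - r) / real n) * Qmoment r 2 k n + (1 - r) / real n * Qmoment r 1 k n"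
    by (rule Qmoment_Suc(3)[OF k(1) step.hyps(1) r])
  also have "\<dots> \<le> (1 + 2 * (1 - r) / real n) * (?e * ((real k)\<^sup>2 * ?P\<^sup>2 + ?W)) + (1 - r) / real n * (?e * real k * ?P)"
    using step.IH r n Qmoment_1_eq[OF k(1) step.hyps(1) r] by (intro add_mono mult_left_mono) auto
  also have "\<dots> = ?e * (real k)\<^sup>2 * ?P\<^sup>2 * (1 + 2 * (1 - r) / real n)
      + ?e * ((1 + 2 * (1 - r) / real n) * ?W + (1 - r) * real k * ?P / real n)"
    by (simp add: algebra_simps)
  also have "\<dots> \<le> ?e * (real k)\<^sup>2 * ?P\<^sup>2 * ?a\<^sup>2
      + ?e * ((1 + 2 * (1 - r) / real n) * ?W + (1 - r) * real k * ?P / real n)"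
    using e by (intro add_right_mono mult_left_mono) (simp_all add: power2_sum)
  also have "\<dots> = ?e * ((real k)\<^sup>2 * (?P * ?a)\<^sup>2 + ((1 + 2 * (1 - r) / real n) * ?W + (1 - r) * real k * ?P / real n))"
    using power_mult_distrib[of ?P ?a 2] by (simp only: distrib_left mult.assoc)
  also have "\<dots> = ?e * ((real k)\<^sup>2 * (rising_prod (1 - r) k (Suc n))\<^sup>2 + var_sum (1 - r) k (Suc n))"
    using step.hyps by (simp only: rising_prod_Suc var_sum_Suc)
  finally show ?case .
qed

lemma Qmoment_0_self_bounds:
  assumes k: "1 \<le> k"
  shows "0 \<le> Qmoment r 0 k k" "Qmoment r 0 k k \<le> 2 / (real k)\<^sup>2"
proof -
  interpret P: prob_space "yule_space r" by (rule prob_space_yule_space)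
  show "0 \<le> Qmoment r 0 k k"
    unfolding Qmoment_def using Qfrac_bounds[OF k] by (simp add: Bochner_Integration.integral_nonneg)
  have "Qmoment r 0 k k \<le> (\<integral>\<omega>. 2 / (real k)\<^sup>2 \<partial>yule_space r)"
    unfolding Qmoment_def
    by (rule integral_mono) (use integrable_Qfrac_mult[OF k, of r k "\<lambda>_. 1"] Qfrac_self_le[OF k] in auto)
  then show "Qmoment r 0 k k \<le> 2 / (real k)\<^sup>2" using P.prob_space by simp
qed

lemma integral_Qfrac_centered_sq_le:
  assumes k: "1 \<le> k" "k \<le> N" and r: "0 \<le> r" "r \<le> 1"
  shows "(\<integral>\<omega>. Qfrac k N \<omega> * (real (num_upto k N \<omega>) - real k * t)\<^sup>2 \<partial>yule_space r)
    \<le> 2 / (real k)\<^sup>2 * ((real k)\<^sup>2 * (rising_prod (1 - r) k N - t)\<^sup>2 + var_sum (1 - r) k N)"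
proof -
  let ?e = "Qmoment r 0 k k" and ?P = "rising_prod (1 - r) k N" and ?W = "var_sum (1 - r) k N"
  have M: "Qmoment r 0 k N = ?e" "Qmoment r 1 k N = ?e * real k * ?P"
    "Qmoment r 2 k N \<le> ?e * ((real k)\<^sup>2 * ?P\<^sup>2 + ?W)"
    using Qmoment_0_eq[OF k r] Qmoment_1_eq[OF k r] Qmoment_2_le[OF k r] by auto
  have "(\<integral>\<omega>. Qfrac k N \<omega> * (real (num_upto k N \<omega>) - real k * t)\<^sup>2 \<partial>yule_space r)
     = (\<integral>\<omega>. Qfrac k N \<omega> * (real (num_upto k N \<omega>))\<^sup>2 - 2 * (real k * t) * (Qfrac k N \<omega> * real (num_upto k N \<omega>))
         + (real k * t)\<^sup>2 * (Qfrac k N \<omega> * 1) \<partial>yule_space r)"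
    by (rule Bochner_Integration.integral_cong[OF refl]) (simp add: power2_eq_square algebra_simps)
  also have "\<dots> = Qmoment r 2 k N - 2 * (real k * t) * Qmoment r 1 k N + (real k * t)\<^sup>2 * Qmoment r 0 k N"
    unfolding Qmoment_def
    using integrable_Qfrac_mult[OF k(1), of r N "\<lambda>c. (real c)\<^sup>2"] integrable_Qfrac_mult[OF k(1), of r N real]
      integrable_Qfrac_mult[OF k(1), of r N "\<lambda>_. 1"]
    by simp
  also have "\<dots> \<le> ?e * ((real k)\<^sup>2 * ?P\<^sup>2 + ?W) - 2 * (real k * t) * (?e * real k * ?P) + (real k * t)\<^sup>2 * ?e"
    using M by simp
  also have "\<dots> = ?e * ((real k)\<^sup>2 * (?P - t)\<^sup>2 + ?W)"
    by (simp add: power2_eq_square algebra_simps)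
  also have "\<dots> \<le> 2 / (real k)\<^sup>2 * ((real k)\<^sup>2 * (?P - t)\<^sup>2 + ?W)"
    using var_sum_nonneg[of "1 - r" k N] r
    by (intro mult_right_mono[OF Qmoment_0_self_bounds(2)[OF k(1)]]) simp_all
  finally show ?thesis .
qed

lemma integral_Qfrac_deviation_le:
  assumes k: "1 \<le> k" "k \<le> N" and r: "0 < r" "r < 1"
  shows "(\<integral>\<omega>. Qfrac k N \<omega> * (real (num_upto k N \<omega>) - real k * (real N / real k) powr (1 - r))\<^sup>2 \<partial>yule_space r)
    \<le> 2 * (exp 1 ^ 2 + 2 * exp 1 ^ 3) * (real N / real k) powr (2 * (1 - r)) / real k"
proof -
  let ?T = "(real N / real k) powr (2 * (1 - r))"
  have b: "0 < 1 - r" "1 - r \<le> 1" using r by auto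
  have "(\<integral>\<omega>. Qfrac k N \<omega> * (real (num_upto k N \<omega>) - real k * (real N / real k) powr (1 - r))\<^sup>2 \<partial>yule_space r)
    \<le> 2 / (real k)\<^sup>2 * ((real k)\<^sup>2 * (rising_prod (1 - r) k N - (real N / real k) powr (1 - r))\<^sup>2 + var_sum (1 - r) k N)"
    by (rule integral_Qfrac_centered_sq_le) (use k r in auto)
  also have "\<dots> \<le> 2 / (real k)\<^sup>2 * (exp 1 ^ 2 * ?T + exp 1 ^ 3 * ((1 - r) + 1) * (real k * ?T))"
    by (intro mult_left_mono add_mono rising_prod_minus_powr_sq_le[OF b k] var_sum_le[OF b k]) simp
  also have "\<dots> \<le> 2 / (real k)\<^sup>2 * (exp 1 ^ 2 * (real k * ?T) + exp 1 ^ 3 * 2 * (real k * ?T))"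
  proof -
    have T0: "0 \<le> ?T" by simp
    have a1: "exp 1 ^ 2 * ?T \<le> exp 1 ^ 2 * (real k * ?T)"
      using k T0 by (intro mult_left_mono) (auto simp: mult_le_cancel_right1)
    have a2: "exp 1 ^ 3 * ((1 - r) + 1) * (real k * ?T) \<le> exp 1 ^ 3 * 2 * (real k * ?T)"
      using r k T0 by (intro mult_right_mono mult_left_mono) auto
    show ?thesis by (rule mult_left_mono[OF add_mono[OF a1 a2]]) simp
  qed
  also have "\<dots> = 2 * (exp 1 ^ 2 + 2 * exp 1 ^ 3) * ?T / real k"
    using k by (simp add: field_simps power2_eq_square)
  finally show ?thesis .
qed

lemma prob_deviation_le:
  assumes k: "1 \<le> k" "k \<le> N" and r: "0 < r" "r < 1" and c: "0 < c"
  shows "measure (yule_space r) {\<omega> \<in> space (yule_space r).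
           \<bar>Wlim k \<omega> * (Xfrac k N \<omega> - (real k / real N) powr r)\<bar> > c / (2 * real N)}
    \<le> 8 * (exp 1 ^ 2 + 2 * exp 1 ^ 3) * (real N powr (1 - r) / c)\<^sup>2 * real k powr - (3 - 2 * r)"
proof -
  let ?t = "(real N / real k) powr (1 - r)" and ?K = "2 * (exp 1 ^ 2 + 2 * exp 1 ^ 3)"
  define Y where "Y \<omega> = Xfrac k N \<omega> - (real k / real N) powr r" for \<omega>
  have N: "0 < real N" and k_pos: "0 < real k"
    using k by simp_all
  have "real N * (real k / real N) powr r = real k * ?t"
    using k by (subst ln_inj_iff[symmetric]) (simp_all add: ln_mult ln_div ln_powr algebra_simps)
  then have Y_eq: "Y \<omega> = (real (num_upto k N \<omega>) - real k * ?t) / real N" for \<omega>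
    unfolding Y_def Xfrac_eq using N by (simp add: field_simps)
  have Y_det: "prefix_determined (N - 1) Y"
    unfolding Y_def Xfrac_eq[abs_def] by (rule prefix_determined_comp[OF prefix_determined_num_upto])
  have Y_abs: "\<bar>Y \<omega>\<bar> \<le> 1" for \<omega>
  proof -
    have "real (num_upto k N \<omega>) / real N \<le> 1" "(real k / real N) powr r \<le> 1"
      using num_upto_le[of k N \<omega>] k r by (auto simp: divide_le_eq_1 intro: powr_le1)
    moreover have "0 \<le> real (num_upto k N \<omega>) / real N" "0 \<le> (real k / real N) powr r"
      by simp_all
    ultimately show ?thesis
      unfolding Y_def Xfrac_eq abs_le_iff by linarith
  qed
  let ?T = "(real N / real k) powr (2 * (1 - r))"
  have "measure (yule_space r) {\<omega> \<in> space (yule_space r). \<bar>Wlim k \<omega> * Y \<omega>\<bar> > c / (2 * real N)}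
      \<le> (\<integral>\<omega>. (Y \<omega>)\<^sup>2 * Qfrac k N \<omega> \<partial>yule_space r) / (c / (2 * real N))\<^sup>2"
    using k r c N by (intro prob_Wlim_mult_gt_le Y_det Y_abs) auto
  also have "\<dots> = (\<integral>\<omega>. Qfrac k N \<omega> * (real (num_upto k N \<omega>) - real k * ?t)\<^sup>2 \<partial>yule_space r)
      / (real N)\<^sup>2 / (c / (2 * real N))\<^sup>2"
    unfolding Y_eq by (simp add: power_divide mult.commute)
  also have "\<dots> \<le> ?K * ?T / real k / (real N)\<^sup>2 / (c / (2 * real N))\<^sup>2"
    by (intro divide_right_mono integral_Qfrac_deviation_le[OF k r]) simp_all
  also have "\<dots> = 4 * ?K * (?T / (real k * c\<^sup>2))"
    using c N k_pos by (simp add: field_simps power2_eq_square)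
  also have "?T / (real k * c\<^sup>2) = (real N powr (1 - r) / c)\<^sup>2 * real k powr - (3 - 2 * r)"
    using k c by (subst ln_inj_iff[symmetric])
      (simp_all add: ln_mult ln_div ln_powr algebra_simps power2_eq_square)
  finally show ?thesis
    by (simp add: Y_def algebra_simps)
qed

theorem lemma4p3:
  fixes r :: real
  assumes "0 < r" and "r < 1"
  shows "\<exists>C>0. \<forall>N::nat. N \<ge> 1 \<longrightarrow> (\<forall>S::real. S > 0 \<longrightarrow> (\<forall>\<delta>::real. \<delta> > 0 \<longrightarrow>
    (\<Sum>k=1..N. measure (yule_space r)
        {\<omega> \<in> space (yule_space r).
           \<bar>Wlim k \<omega> * (Xfrac k N \<omega> - (real k / real N) powr r)\<bar> > \<delta> * S / (2 * real N)})
    \<le> C * ((real N powr (1 - r)) / (\<delta> * S)) powr (2 / (3 - 2 * r))))"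
proof -
  define B :: real where "B = 8 * (exp 1 ^ 2 + 2 * exp 1 ^ 3)"
  define \<gamma> :: real where "\<gamma> = 3 - 2 * r"
  have \<gamma>: "1 < \<gamma>"
    using assms by (simp add: \<gamma>_def)
  have B: "0 \<le> B"
    by (simp add: B_def)
  interpret prob_space "yule_space r"
    by (rule prob_space_yule_space)
  show ?thesis
  proof (intro exI[of _ "1 + B * (1 + 1 / (\<gamma> - 1))"] conjI allI impI, goal_cases)
    case 1
    show ?case
      using B \<gamma> by (simp add: add_pos_nonneg)
  next
    case (2 N S \<delta>)
    show ?case
      unfolding \<gamma>_def[symmetric]
    proof (rule sum_min_power_le[OF \<gamma> _ B], goal_cases)
      case 1
      show ?case
        using 2 by simp
    next
      case (2 k)
      show ?case
        by (rule prob_le_1)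
    next
      case (3 k)
      then show ?case
        unfolding B_def \<gamma>_def using 2 assms by (intro prob_deviation_le) auto
    qed
  qed
qed

end
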